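(* Let $\omega$ be uniformly distributed on $\{0,1\}^{[n]}$, $[n]=\{1,\dots,n\}$. For $\lambda\in(0,1)$ let $\ell_\lambda:=\lfloor n^\lambda\rfloor$ and $m_\lambda:=\lfloor n/\ell_\lambda\rfloor$, partition the first $m_\lambda\ell_\lambda$ coordinates into consecutive blocks ("tribes") of length $\ell_\lambda$, let $S_j$ be the sum of the coordinates of $\omega$ in the $j$th tribe, and $S^\lambda:=\max_{1\le j\le m_\lambda}S_j$. For $\beta\in(0,1)$ let $q_{\lambda,\beta}$ be any $\beta$-quantile of $S^\lambda$, and $f_{\lambda,\beta}:=\mathbbm{1}_{\{S^\lambda>q_{\lambda,\beta}\}}$. Then for every $\lambda,\beta\in(0,1)$, as $n\to\infty$, the sequence $f_{\lambda,\beta}$ is noise sensitive and $\mathbb{P}(f_{\lambda,\beta}=0)\to\beta$.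
   Context: A $\beta$-quantile of a random variable $X$ is any $q$ with $\mathbb{P}(X<q)\le\beta\le\mathbb{P}(X\le q)$. For $\omega$ uniform on $\{0,1\}^n$ and $\varepsilon\in(0,1)$, $\omega^\varepsilon$ is obtained by independently resampling each coordinate (uniformly) with probability $\varepsilon$. A sequence of functions $f_n:\{0,1\}^n\to\{0,1\}$ is noise sensitive if for every $\varepsilon>0$, $\mathbb{E}[f_n(\omega)f_n(\omega^\varepsilon)]-\mathbb{E}[f_n(\omega)]^2\to0$ as $n\to\infty$. *)

theory Defs
  imports Complex_Main "HOL-Library.FuncSet"
begin

text \<open>The discrete cube {0,1}^n, with coordinates indexed by 0..n-1
  (booleans encode the bits; coordinates outside are fixed to undefined).\<close>
definition cube :: "nat \<Rightarrow> (nat \<Rightarrow> bool) set" where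
  "cube n = {0..<n} \<rightarrow>\<^sub>E (UNIV :: bool set)"

definition prob_unif :: "nat \<Rightarrow> ((nat \<Rightarrow> bool) \<Rightarrow> bool) \<Rightarrow> real" where
  "prob_unif n P = real (card {x \<in> cube n. P x}) / 2 ^ n"

definition expect_unif :: "nat \<Rightarrow> ((nat \<Rightarrow> bool) \<Rightarrow> real) \<Rightarrow> real" where
  "expect_unif n g = (\<Sum>x\<in>cube n. g x) / 2 ^ n"

text \<open>Joint law of one coordinate (omega_i, omega^eps_i): omega_i uniform, and with
  probability eps the coordinate is resampled uniformly, otherwise kept.\<close>
definition noise_kernel :: "real \<Rightarrow> bool \<Rightarrow> bool \<Rightarrow> real" where
  "noise_kernel eps a b = (1/2) * ((1 - eps) * (if a = b then 1 else 0) + eps / 2)"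

text \<open>E[f(omega) f(omega^eps)] for f : {0,1}^n -> {0,1}.\<close>
definition noise_corr :: "nat \<Rightarrow> real \<Rightarrow> ((nat \<Rightarrow> bool) \<Rightarrow> bool) \<Rightarrow> real" where
  "noise_corr n eps f =
     (\<Sum>x\<in>cube n. \<Sum>y\<in>cube n.
        (\<Prod>i<n. noise_kernel eps (x i) (y i)) * of_bool (f x) * of_bool (f y))"

definition noise_sensitive :: "(nat \<Rightarrow> (nat \<Rightarrow> bool) \<Rightarrow> bool) \<Rightarrow> bool" where
  "noise_sensitive f \<longleftrightarrow>
     (\<forall>eps. 0 < eps \<and> eps < 1 \<longrightarrow>
        (\<lambda>n. noise_corr n eps (f n) - (expect_unif n (\<lambda>x. of_bool (f n x)))^2) \<longlonglongrightarrow> 0)"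

definition tribe_len :: "real \<Rightarrow> nat \<Rightarrow> nat" where
  "tribe_len lam n = nat \<lfloor>real n powr lam\<rfloor>"

definition tribe_num :: "real \<Rightarrow> nat \<Rightarrow> nat" where
  "tribe_num lam n = n div tribe_len lam n"

text \<open>Sum of the coordinates in the j-th tribe (0-based j), i.e. coordinates j*l..(j+1)*l-1.\<close>
definition tribe_sum :: "real \<Rightarrow> nat \<Rightarrow> (nat \<Rightarrow> bool) \<Rightarrow> nat \<Rightarrow> nat" where
  "tribe_sum lam n x j = card {i \<in> {j * tribe_len lam n ..< (j + 1) * tribe_len lam n}. x i}"

definition tribe_max :: "real \<Rightarrow> nat \<Rightarrow> (nat \<Rightarrow> bool) \<Rightarrow> nat" where
  "tribe_max lam n x = Max (tribe_sum lam n x ` {..<tribe_num lam n})"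

definition is_quantile :: "nat \<Rightarrow> ((nat \<Rightarrow> bool) \<Rightarrow> nat) \<Rightarrow> real \<Rightarrow> real \<Rightarrow> bool" where
  "is_quantile n X beta q \<longleftrightarrow>
     prob_unif n (\<lambda>x. real (X x) < q) \<le> beta \<and> beta \<le> prob_unif n (\<lambda>x. real (X x) \<le> q)"

end

theory Submission
  imports Defs "HOL-Probability.Hoeffding" "HOL-Real_Asymp.Real_Asymp"
begin

text \<open>Let \<open>l\<close> be the tribe length, \<open>m\<close> the number of tribes, \<open>G = P(Bin(l,1/2) > q)\<close> and
  \<open>H = P(Bin(l,1/2) \<ge> q)\<close>. By independence of the tribes \<open>P(f = 0) = (1 - G)^m\<close>, and the
  quantile property \<open>(1 - H)^m \<le> \<beta> \<le> (1 - G)^m\<close> gives \<open>m G \<le> -ln \<beta>\<close> and \<open>1 - \<beta> \<le> m H\<close>.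
  Hence \<open>|P(f = 0) - \<beta>| \<le> m (H - G) = m P(Bin = q)\<close>; since \<open>q - l/2 = O(\<surd>(l log n))\<close>, the ratios
  of consecutive binomial probabilities stay close to 1 for the next \<open>J \<approx> n^(\<lambda>/8)\<close> values
  after \<open>q\<close>, so \<open>P(Bin = q) \<le> 2 G / J\<close>.

  For noise sensitivity, \<open>E[f(\<omega>) f(\<omega>\<^sup>\<epsilon>)] - E[f]\<^sup>2\<close> is a difference of two products over the
  tribes, hence at most \<open>m\<close> times the excess \<open>P(X > q, Y > q) - G\<^sup>2\<close> of a single tribe, where
  \<open>X\<close>, \<open>Y\<close> count the ones of \<open>\<omega>\<close> and \<open>\<omega>\<^sup>\<epsilon>\<close> in it. Given \<open>X\<close>, the residual
  \<open>Y - (1 - \<epsilon>) X - \<epsilon> l/2\<close> has variance at most \<open>l/4\<close>; with \<open>t = q - l/2\<close> Chebyshev gives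
  \<open>P(X > q, Y > q) \<le> P(X > q + \<epsilon> t/2) + G l / (\<epsilon> t)\<^sup>2\<close>, and the binomial tail loses a
  factor \<open>exp (-t/l)\<close> per unit step. After multiplying by \<open>m\<close> every term is controlled by
  \<open>m G \<le> -ln \<beta>\<close> and tends to 0 because \<open>t\<^sup>2 / l \<rightarrow> \<infinity>\<close>: a quantile within \<open>M \<surd>l\<close> of
  \<open>l/2\<close> would make \<open>G\<close> bounded below by a constant, contradicting \<open>m G \<le> -ln \<beta>\<close>
  with \<open>m \<rightarrow> \<infinity>\<close>.\<close>

section \<open>Expectations under finite product weights\<close>

definition prod_expect :: "('a::finite \<Rightarrow> real) \<Rightarrow> nat set \<Rightarrow> ((nat \<Rightarrow> 'a) \<Rightarrow> real) \<Rightarrow> real" where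
  "prod_expect w I F = (\<Sum>z \<in> I \<rightarrow>\<^sub>E UNIV. (\<Prod>i\<in>I. w (z i)) * F z)"

definition depends_on :: "((nat \<Rightarrow> 'a) \<Rightarrow> 'b) \<Rightarrow> nat set \<Rightarrow> bool" where
  "depends_on F J \<longleftrightarrow> (\<forall>z z'. (\<forall>j\<in>J. z j = z' j) \<longrightarrow> F z = F z')"

lemma prod_expect_empty: "prod_expect w {} F = F (\<lambda>_. undefined)"
  by (simp add: prod_expect_def)

lemma prod_expect_insert:
  assumes "finite I" "i \<notin> I"
  shows "prod_expect w (insert i I) F = (\<Sum>c\<in>UNIV. w c * prod_expect w I (\<lambda>z. F (z(i:=c))))"
proof -
  have "prod_expect w (insert i I) F = (\<Sum>z \<in> (\<lambda>(y, g). g(i := y)) ` (UNIV \<times> (I \<rightarrow>\<^sub>E UNIV)).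
          (\<Prod>j\<in>insert i I. w (z j)) * F z)"
    unfolding prod_expect_def by (simp add: PiE_insert_eq)
  also have "\<dots> = (\<Sum>(y,g) \<in> UNIV \<times> (I \<rightarrow>\<^sub>E UNIV).
          (\<Prod>j\<in>insert i I. w ((g(i:=y)) j)) * F (g(i:=y)))"
    by (subst sum.reindex) (use inj_combinator[OF assms(2), of "\<lambda>_. UNIV"] in
        \<open>auto simp: case_prod_unfold\<close>)
  also have "\<dots> = (\<Sum>(y,g) \<in> UNIV \<times> (I \<rightarrow>\<^sub>E UNIV). w y * ((\<Prod>j\<in>I. w (g j)) * F (g(i:=y))))"
  proof (intro sum.cong refl, clarify)
    fix y g
    have "(\<Prod>j\<in>I. w ((g(i:=y)) j)) = (\<Prod>j\<in>I. w (g j))"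
      using assms(2) by (intro prod.cong) auto
    then show "(\<Prod>j\<in>insert i I. w ((g(i:=y)) j)) * F (g(i:=y)) =
        w y * ((\<Prod>j\<in>I. w (g j)) * F (g(i:=y)))"
      using assms by simp
  qed
  also have "\<dots> = (\<Sum>c\<in>UNIV. w c * prod_expect w I (\<lambda>z. F (z(i:=c))))"
    unfolding prod_expect_def by (simp add: sum.cartesian_product[symmetric] sum_distrib_left)
  finally show ?thesis .
qed

lemma prod_expect_cong:
  assumes "\<And>z. z \<in> I \<rightarrow>\<^sub>E UNIV \<Longrightarrow> F z = G z"
  shows "prod_expect w I F = prod_expect w I G"
  unfolding prod_expect_def using assms by (intro sum.cong) auto

lemma prod_expect_add: "prod_expect w I (\<lambda>z. F z + G z) = prod_expect w I F + prod_expect w I G"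
  unfolding prod_expect_def by (simp add: distrib_left sum.distrib)

lemma prod_expect_diff: "prod_expect w I (\<lambda>z. F z - G z) = prod_expect w I F - prod_expect w I G"
  unfolding prod_expect_def by (simp add: right_diff_distrib sum_subtractf)

lemma prod_expect_cmult: "prod_expect w I (\<lambda>z. c * F z) = c * prod_expect w I F"
  unfolding prod_expect_def by (simp add: sum_distrib_left mult_ac)

lemma prod_expect_sum:
  "finite A \<Longrightarrow> prod_expect w I (\<lambda>z. \<Sum>a\<in>A. F a z) = (\<Sum>a\<in>A. prod_expect w I (F a))"
  by (induction A rule: finite_induct) (simp_all add: prod_expect_add, simp add: prod_expect_def)

lemma prod_expect_mono:
  assumes "\<And>c. w c \<ge> 0" "\<And>z. z \<in> I \<rightarrow>\<^sub>E UNIV \<Longrightarrow> F z \<le> G z"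
  shows "prod_expect w I F \<le> prod_expect w I G"
  unfolding prod_expect_def using assms by (intro sum_mono mult_left_mono prod_nonneg) auto

lemma prod_expect_nonneg:
  assumes "\<And>c. w c \<ge> 0" "\<And>z. F z \<ge> 0"
  shows "prod_expect w I F \<ge> 0"
  unfolding prod_expect_def using assms by (intro sum_nonneg mult_nonneg_nonneg prod_nonneg) auto

lemma prod_expect_const:
  assumes "finite I" "sum w UNIV = 1"
  shows "prod_expect w I (\<lambda>_. k) = k"
  using assms(1)
proof (induction I rule: finite_induct)
  case empty
  then show ?case by (simp add: prod_expect_empty)
next
  case (insert i I)
  then show ?case using assms(2) by (simp add: prod_expect_insert sum_distrib_right[symmetric])
qed

lemma depends_on_fun_upd: "depends_on F J \<Longrightarrow> depends_on (\<lambda>z. F (z(i:=c))) (J - {i})"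
  unfolding depends_on_def
proof (intro allI impI)
  fix z z' :: "nat \<Rightarrow> 'a"
  assume "\<forall>z z'. (\<forall>j\<in>J. z j = z' j) \<longrightarrow> F z = F z'" and "\<forall>j\<in>J - {i}. z j = z' j"
  moreover have "\<forall>j\<in>J. (z(i:=c)) j = (z'(i:=c)) j" using calculation(2) by simp
  ultimately show "F (z(i:=c)) = F (z'(i:=c))" by blast
qed

lemma depends_on_fun_upd_eq: "depends_on F J \<Longrightarrow> i \<notin> J \<Longrightarrow> F (z(i:=c)) = F z"
  unfolding depends_on_def
proof -
  assume "\<forall>z z'. (\<forall>j\<in>J. z j = z' j) \<longrightarrow> F z = F z'" and "i \<notin> J"
  moreover have "\<forall>j\<in>J. (z(i:=c)) j = z j" using calculation(2) by auto
  ultimately show ?thesis by blast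
qed

lemma depends_on_prod:
  assumes "\<And>j. j \<in> A \<Longrightarrow> depends_on (F j) (B j)" "\<And>j. j \<in> A \<Longrightarrow> B j \<subseteq> K"
  shows "depends_on (\<lambda>z. \<Prod>j\<in>A. F j z) K"
  using assms unfolding depends_on_def by (intro allI impI prod.cong refl) blast

lemma depends_on_card: "depends_on (\<lambda>x. g (card {i\<in>B. x i})) B"
  unfolding depends_on_def by (intro allI impI arg_cong[where f="\<lambda>S. g (card S)"] Collect_cong) auto

lemma prod_expect_mult_indep:
  assumes "finite I"
  shows "J \<subseteq> I \<Longrightarrow> depends_on F J \<Longrightarrow> depends_on G (I - J) \<Longrightarrow>
         prod_expect w I (\<lambda>z. F z * G z) = prod_expect w J F * prod_expect w (I - J) G"
  using assms
proof (induction I arbitrary: J F G rule: finite_induct)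
  case empty
  then show ?case by (simp add: prod_expect_empty)
next
  case (insert i I)
  show ?case
  proof (cases "i \<in> J")
    case True
    have fin: "finite (J - {i})" using insert by (meson finite_Diff finite_insert finite_subset)
    have G_upd: "G (z(i:=c)) = G z" for z c
      using depends_on_fun_upd_eq[OF insert.prems(3)] True by blast
    have IH: "prod_expect w I (\<lambda>z. F (z(i:=c)) * G z) =
        prod_expect w (J - {i}) (\<lambda>z. F (z(i:=c))) * prod_expect w (insert i I - J) G" for c
    proof -
      have eq: "I - (J - {i}) = insert i I - J" using True insert.hyps by auto
      have "J - {i} \<subseteq> I" using insert.prems(1) by auto
      moreover have "depends_on G (I - (J - {i}))" using insert.prems(3) eq by simp
      ultimately show ?thesis
        using insert.IH[OF _ depends_on_fun_upd[OF insert.prems(2)]] by (simp only: eq)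
    qed
    have "prod_expect w (insert i I) (\<lambda>z. F z * G z) =
          (\<Sum>c\<in>UNIV. w c * prod_expect w (J - {i}) (\<lambda>z. F (z(i:=c)))) * prod_expect w (insert i I - J) G"
      using insert.hyps by (simp add: prod_expect_insert G_upd IH sum_distrib_right mult.assoc)
    also have "(\<Sum>c\<in>UNIV. w c * prod_expect w (J - {i}) (\<lambda>z. F (z(i:=c)))) = prod_expect w J F"
      using prod_expect_insert[OF fin, of i w F] True by (simp add: insert_absorb)
    finally show ?thesis .
  next
    case False
    have F_upd: "F (z(i:=c)) = F z" for z c
      using depends_on_fun_upd_eq[OF insert.prems(2) False] .
    have IH: "prod_expect w I (\<lambda>z. F z * G (z(i:=c))) =
        prod_expect w J F * prod_expect w (I - J) (\<lambda>z. G (z(i:=c)))" for c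
    proof -
      have eq: "insert i I - J - {i} = I - J" using insert.hyps by auto
      have "J \<subseteq> I" using insert.prems(1) False by auto
      moreover have "depends_on (\<lambda>z. G (z(i:=c))) (I - J)"
        using depends_on_fun_upd[OF insert.prems(3), of i c] by (simp only: eq)
      ultimately show ?thesis using insert.IH[OF _ insert.prems(2)] by simp
    qed
    have "prod_expect w (insert i I) (\<lambda>z. F z * G z) =
          prod_expect w J F * (\<Sum>c\<in>UNIV. w c * prod_expect w (I - J) (\<lambda>z. G (z(i:=c))))"
      using insert.hyps by (simp add: prod_expect_insert F_upd IH sum_distrib_left mult_ac)
    also have "(\<Sum>c\<in>UNIV. w c * prod_expect w (I - J) (\<lambda>z. G (z(i:=c)))) = prod_expect w (insert i I - J) G"
      using prod_expect_insert[of "I - J" i w G] insert.hyps False by (simp add: insert_Diff_if)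
    finally show ?thesis .
  qed
qed

lemma prod_expect_prod_disjoint:
  fixes F :: "nat \<Rightarrow> (nat \<Rightarrow> 'a::finite) \<Rightarrow> real"
  assumes w: "sum w UNIV = 1"
  shows "finite I \<Longrightarrow> (\<And>j. j < m \<Longrightarrow> B j \<subseteq> I) \<Longrightarrow>
    (\<And>j j'. j < m \<Longrightarrow> j' < m \<Longrightarrow> j \<noteq> j' \<Longrightarrow> B j \<inter> B j' = {}) \<Longrightarrow>
    (\<And>j. j < m \<Longrightarrow> depends_on (F j) (B j)) \<Longrightarrow>
    prod_expect w I (\<lambda>z. \<Prod>j<m. F j z) = (\<Prod>j<m. prod_expect w (B j) (F j))"
proof (induction m arbitrary: I)
  case 0
  then show ?case using prod_expect_const[OF _ w] by simp
next
  case (Suc m)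
  have sub: "B j \<subseteq> I - B m" if "j < m" for j
  proof -
    have "B j \<subseteq> I" "B j \<inter> B m = {}" using Suc.prems(2,3) that by auto
    then show ?thesis by blast
  qed
  have dep: "depends_on (F j) (B j)" if "j < Suc m" for j
    using Suc.prems(4) that .
  have "prod_expect w I (\<lambda>z. \<Prod>j<Suc m. F j z) = prod_expect w I (\<lambda>z. F m z * (\<Prod>j<m. F j z))"
    by (simp add: mult.commute)
  also have "\<dots> = prod_expect w (B m) (F m) * prod_expect w (I - B m) (\<lambda>z. \<Prod>j<m. F j z)"
  proof (rule prod_expect_mult_indep)
    show "depends_on (\<lambda>z. \<Prod>j<m. F j z) (I - B m)"
      using dep sub by (intro depends_on_prod[where B=B]) auto
  qed (use Suc.prems(1,2) dep in auto)
  also have "prod_expect w (I - B m) (\<lambda>z. \<Prod>j<m. F j z) = (\<Prod>j<m. prod_expect w (B j) (F j))"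
  proof (rule Suc.IH)
    show "B j \<inter> B j' = {}" if "j < m" "j' < m" "j \<noteq> j'" for j j'
      using Suc.prems(3) that by simp
  qed (use Suc.prems(1) sub dep in auto)
  finally show ?case by (simp add: mult.commute)
qed

lemma sum_UNIV_fibers:
  fixes wa :: "'b::finite \<Rightarrow> real" and \<pi> :: "'b \<Rightarrow> 'a::finite"
  shows "(\<Sum>b\<in>UNIV. wa b * V (\<pi> b)) = (\<Sum>a\<in>UNIV. (\<Sum>b\<in>{b. \<pi> b = a}. wa b) * V a)"
proof -
  have "(\<Sum>b\<in>UNIV. wa b * V (\<pi> b)) = (\<Sum>a\<in>UNIV. \<Sum>b\<in>{x. x \<in> UNIV \<and> \<pi> x = a}. wa b * V (\<pi> b))"
    by (rule sum.group[symmetric]) auto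
  also have "\<dots> = (\<Sum>a\<in>UNIV. (\<Sum>b\<in>{b. \<pi> b = a}. wa b) * V a)"
    by (intro sum.cong refl) (auto simp: sum_distrib_right)
  finally show ?thesis .
qed

lemma prod_expect_map:
  fixes wa :: "'b::finite \<Rightarrow> real" and wb :: "'a::finite \<Rightarrow> real" and \<pi> :: "'b \<Rightarrow> 'a"
  assumes w: "\<And>a. (\<Sum>b\<in>{b. \<pi> b = a}. wa b) = wb a" and "finite I"
  shows "depends_on F I \<Longrightarrow> prod_expect wa I (\<lambda>z. F (\<lambda>i. \<pi> (z i))) = prod_expect wb I F"
  using assms(2)
proof (induction I arbitrary: F rule: finite_induct)
  case empty
  then show ?case by (simp add: prod_expect_empty depends_on_def)
next
  case (insert i I)
  have upd: "(\<lambda>j. \<pi> ((z(i:=b)) j)) = (\<lambda>j. \<pi> (z j))(i := \<pi> b)" for z b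
    by auto
  have dep: "depends_on (\<lambda>x. F (x(i:=a))) I" for a
  proof -
    have "insert i I - {i} = I" using insert.hyps by auto
    then show ?thesis using depends_on_fun_upd[OF insert.prems, of i a] by (simp only:)
  qed
  have "prod_expect wa (insert i I) (\<lambda>z. F (\<lambda>i. \<pi> (z i))) =
        (\<Sum>b\<in>UNIV. wa b * prod_expect wb I (\<lambda>x. F (x(i := \<pi> b))))"
    by (simp only: prod_expect_insert[OF insert.hyps] upd insert.IH[OF dep])
  also have "\<dots> = (\<Sum>a\<in>UNIV. wb a * prod_expect wb I (\<lambda>x. F (x(i := a))))"
    by (subst sum_UNIV_fibers[where V="\<lambda>a. prod_expect wb I (\<lambda>x. F (x(i := a)))"]) (simp add: w)
  also have "\<dots> = prod_expect wb (insert i I) F"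
    using insert.hyps by (simp add: prod_expect_insert)
  finally show ?case .
qed

lemma sum_UNIV_prod:
  "(\<Sum>c\<in>(UNIV :: ('a::finite \<times> 'b::finite) set). g c) = (\<Sum>a\<in>UNIV. \<Sum>b\<in>UNIV. g (a,b))"
  by (subst UNIV_Times_UNIV[symmetric], subst sum.cartesian_product) simp

text \<open>Hypothesis \<open>cond\<close> says that the conditional mean of \<open>\<phi>\<close> given the first component is
  \<open>\<kappa>\<close>.\<close>
lemma prod_expect_mult_cond_const:
  fixes w :: "('a::finite \<times> 'b::finite) \<Rightarrow> real"
  assumes I: "finite I" "i \<in> I"
    and cond: "\<And>a. (\<Sum>b\<in>UNIV. w (a,b) * \<phi> (a,b)) = \<kappa> * (\<Sum>b\<in>UNIV. w (a,b))"
    and F: "\<And>z a b b'. F (z(i:=(a,b))) = F (z(i:=(a,b')))"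
  shows "prod_expect w I (\<lambda>z. F z * \<phi> (z i)) = \<kappa> * prod_expect w I F"
proof -
  define I' where "I' = I - {i}"
  have I': "finite I'" "i \<notin> I'" "I = insert i I'" using I by (auto simp: I'_def)
  define X where "X a = prod_expect w I' (\<lambda>z. F (z(i:=(a,undefined))))" for a
  have FX: "prod_expect w I' (\<lambda>z. F (z(i:=(a,b)))) = X a" for a b
    unfolding X_def by (intro prod_expect_cong) (simp add: F[of _ a b undefined])
  have FX': "prod_expect w I' (\<lambda>z. F (z(i:=(a,b))) * \<phi> (a,b)) = \<phi> (a,b) * X a" for a b
    using prod_expect_cmult[of w I' "\<phi> (a,b)" "\<lambda>z. F (z(i:=(a,b)))"] FX[of a b]
    by (simp add: mult.commute)
  have "prod_expect w I (\<lambda>z. F z * \<phi> (z i)) = (\<Sum>a\<in>UNIV. \<Sum>b\<in>UNIV. w (a,b) * (\<phi> (a,b) * X a))"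
    using I' by (simp add: prod_expect_insert sum_UNIV_prod FX')
  also have "\<dots> = (\<Sum>a\<in>UNIV. (\<Sum>b\<in>UNIV. w (a,b) * \<phi> (a,b)) * X a)"
    by (simp add: sum_distrib_right mult.assoc)
  also have "\<dots> = (\<Sum>a\<in>UNIV. \<kappa> * (\<Sum>b\<in>UNIV. w (a,b)) * X a)"
    by (simp only: cond)
  also have "\<dots> = \<kappa> * (\<Sum>a\<in>UNIV. \<Sum>b\<in>UNIV. w (a,b) * X a)"
    by (simp add: sum_distrib_left sum_distrib_right mult_ac)
  also have "(\<Sum>a\<in>UNIV. \<Sum>b\<in>UNIV. w (a,b) * X a) = prod_expect w I F"
    using I' by (simp add: prod_expect_insert sum_UNIV_prod FX)
  finally show ?thesis .
qed

section \<open>The binomial distribution with parameter 1/2\<close>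

definition bin_pmf :: "nat \<Rightarrow> nat \<Rightarrow> real" where
  "bin_pmf l k = real (l choose k) / 2 ^ l"

definition tail_gt :: "nat \<Rightarrow> real \<Rightarrow> real" where
  "tail_gt l x = (\<Sum>k\<in>{k. k \<le> l \<and> x < real k}. bin_pmf l k)"

definition tail_ge :: "nat \<Rightarrow> real \<Rightarrow> real" where
  "tail_ge l x = (\<Sum>k\<in>{k. k \<le> l \<and> x \<le> real k}. bin_pmf l k)"

lemma bin_pmf_nonneg: "bin_pmf l k \<ge> 0"
  by (simp add: bin_pmf_def)

lemma sum_bin_pmf: "(\<Sum>k\<le>l. bin_pmf l k) = 1"
proof -
  have "(\<Sum>k\<le>l. real (l choose k)) = 2 ^ l"
    using choose_row_sum[of l] by (metis of_nat_numeral of_nat_power of_nat_sum)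
  then show ?thesis by (simp add: bin_pmf_def sum_divide_distrib[symmetric])
qed

lemma bin_pmf_symmetric: "k \<le> l \<Longrightarrow> bin_pmf l (l - k) = bin_pmf l k"
  by (simp add: bin_pmf_def binomial_symmetric[symmetric])

lemma bin_pmf_Suc: "bin_pmf l (Suc j) = (real l - real j) / (real j + 1) * bin_pmf l j"
proof -
  have "bin_pmf l (Suc j) * (real j + 1) = bin_pmf l j * (real l - real j)"
  proof (cases "j < l")
    case True
    then obtain n where l: "l = Suc n" by (cases l) auto
    have "Suc j * (l choose Suc j) = (l - j) * (l choose j)"
      using Suc_times_binomial[of j n] binomial_absorb_comp[of l j] l by simp
    then have "real (Suc j) * real (l choose Suc j) = real (l - j) * real (l choose j)"
      by (metis of_nat_mult)
    then have "(real j + 1) * real (l choose Suc j) = (real l - real j) * real (l choose j)"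
      using True by (simp add: add.commute)
    then show ?thesis by (simp add: bin_pmf_def field_simps)
  next
    case False
    then show ?thesis by (cases "j = l") (simp_all add: bin_pmf_def binomial_eq_0)
  qed
  then show ?thesis by (simp add: field_simps)
qed

lemma tail_gt_nonneg: "tail_gt l x \<ge> 0"
  unfolding tail_gt_def by (intro sum_nonneg bin_pmf_nonneg)

lemma tail_ge_nonneg: "tail_ge l x \<ge> 0"
  unfolding tail_ge_def by (intro sum_nonneg bin_pmf_nonneg)

lemma tail_gt_le_one: "tail_gt l x \<le> 1"
proof -
  have "tail_gt l x \<le> (\<Sum>k\<le>l. bin_pmf l k)"
    unfolding tail_gt_def by (intro sum_mono2) (auto intro: bin_pmf_nonneg)
  then show ?thesis using sum_bin_pmf by simp
qed

lemma tail_ge_le_one: "tail_ge l x \<le> 1"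
proof -
  have "tail_ge l x \<le> (\<Sum>k\<le>l. bin_pmf l k)"
    unfolding tail_ge_def by (intro sum_mono2) (auto intro: bin_pmf_nonneg)
  then show ?thesis using sum_bin_pmf by simp
qed

lemma tail_gt_le_tail_ge: "tail_gt l x \<le> tail_ge l x"
  unfolding tail_gt_def tail_ge_def by (intro sum_mono2) (auto intro: bin_pmf_nonneg)

lemma tail_ge_le_tail_gt: "x < y \<Longrightarrow> tail_ge l y \<le> tail_gt l x"
  unfolding tail_ge_def tail_gt_def by (intro sum_mono2) (auto intro: bin_pmf_nonneg)

lemma tail_gt_antimono: "x \<le> y \<Longrightarrow> tail_gt l y \<le> tail_gt l x"
  unfolding tail_gt_def by (intro sum_mono2) (auto intro: bin_pmf_nonneg)

lemma tail_ge_eq_tail_gt: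
  assumes "x \<notin> \<nat>"
  shows "tail_ge l x = tail_gt l x"
proof -
  have "x \<le> real k \<longleftrightarrow> x < real k" for k
    using assms of_nat_in_Nats[of k] by (auto simp: order_le_less)
  then show ?thesis unfolding tail_ge_def tail_gt_def by simp
qed

lemma tail_ge_minus_tail_gt: "tail_ge l (real k) - tail_gt l (real k) = bin_pmf l k"
proof -
  have "{j. j \<le> l \<and> real k \<le> real j} = {j. j \<le> l \<and> real k < real j} \<union> {j. j \<le> l \<and> j = k}"
    by auto
  then have "tail_ge l (real k) = tail_gt l (real k) + (\<Sum>j\<in>{j. j \<le> l \<and> j = k}. bin_pmf l j)"
    unfolding tail_ge_def tail_gt_def by (subst sum.union_disjoint[symmetric]) auto
  moreover have "{j. j \<le> l \<and> j = k} = (if k \<le> l then {k} else {})"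
    by auto
  ultimately show ?thesis by (simp add: bin_pmf_def binomial_eq_0)
qed

lemma tail_ge_hoeffding:
  assumes "l > 0" "u \<ge> 0"
  shows "tail_ge l (real l / 2 + u) \<le> exp (- 2 * u\<^sup>2 / real l)"
proof -
  let ?M = "binomial_pmf l (1/2)"
  let ?A = "{k. k \<le> l \<and> real l / 2 + u \<le> real k}"
  have "binomial_distribution (1/2::real)" by unfold_locales auto
  then have "measure_pmf.prob ?M {x. real l * (1/2) + u \<le> real x} \<le> exp (- 2 * u\<^sup>2 / real l)"
    using assms by (rule binomial_distribution.prob_ge)
  moreover have "measure_pmf.prob ?M {x. real l * (1/2) + u \<le> real x} =
      measure_pmf.prob ?M ({x. real l * (1/2) + u \<le> real x} \<inter> set_pmf ?M)"
    by (rule measure_Int_set_pmf[symmetric])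
  moreover have "{x. real l * (1/2) + u \<le> real x} \<inter> set_pmf ?M = ?A"
    by (subst set_pmf_binomial) auto
  moreover have "measure_pmf.prob ?M ?A = tail_ge l (real l / 2 + u)"
  proof -
    have "measure_pmf.prob ?M ?A = sum (pmf ?M) ?A"
      by (rule measure_measure_pmf_finite) simp
    also have "\<dots> = tail_ge l (real l / 2 + u)"
      unfolding tail_ge_def
    proof (intro sum.cong refl)
      fix k assume "k \<in> ?A"
      then have "k + (l - k) = l" by simp
      moreover have "(1/2::real) ^ k * (1 - 1/2) ^ (l - k) = (1/2) ^ (k + (l - k))"
        by (simp add: power_add)
      ultimately show "pmf ?M k = bin_pmf l k"
        by (simp add: bin_pmf_def power_one_over)
    qed
    finally show ?thesis .
  qed
  ultimately show ?thesis by simp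
qed

lemma tail_ge_half: "tail_ge l (real l / 2) \<ge> 1/2"
proof -
  let ?A = "{k. k \<le> l \<and> real l / 2 \<le> real k}"
  let ?B = "{k. k \<le> l \<and> real k \<le> real l / 2}"
  have "bij_betw (\<lambda>k. l - k) ?A ?B"
    by (rule bij_betwI[where g="\<lambda>k. l - k"]) auto
  then have "(\<Sum>k\<in>?B. bin_pmf l k) = (\<Sum>k\<in>?A. bin_pmf l (l - k))"
    by (rule sum.reindex_bij_betw[symmetric])
  also have "\<dots> = tail_ge l (real l / 2)"
    unfolding tail_ge_def by (intro sum.cong refl) (simp add: bin_pmf_symmetric)
  finally have B: "(\<Sum>k\<in>?B. bin_pmf l k) = tail_ge l (real l / 2)" .
  have "{..l} = ?A \<union> ?B" by auto
  then have "1 = (\<Sum>k\<in>?A \<union> ?B. bin_pmf l k)" using sum_bin_pmf[of l] by simp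
  also have "\<dots> = (\<Sum>k\<in>?A. bin_pmf l k) + (\<Sum>k\<in>?B. bin_pmf l k) - (\<Sum>k\<in>?A \<inter> ?B. bin_pmf l k)"
    by (rule sum_Un) auto
  also have "\<dots> \<le> (\<Sum>k\<in>?A. bin_pmf l k) + (\<Sum>k\<in>?B. bin_pmf l k)"
    by (simp add: sum_nonneg bin_pmf_nonneg)
  finally show ?thesis using B unfolding tail_ge_def by simp
qed

lemma bin_pmf_Suc_le:
  "(real l - real j) / (real j + 1) \<le> \<rho> \<Longrightarrow> bin_pmf l (Suc j) \<le> \<rho> * bin_pmf l j"
  unfolding bin_pmf_Suc by (intro mult_right_mono bin_pmf_nonneg)

lemma bin_pmf_Suc_ge:
  "\<rho> \<le> (real l - real j) / (real j + 1) \<Longrightarrow> \<rho> * bin_pmf l j \<le> bin_pmf l (Suc j)"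
  unfolding bin_pmf_Suc by (intro mult_right_mono bin_pmf_nonneg)

lemma tail_gt_add_one_le:
  assumes "x \<ge> 0" "\<rho> \<ge> 0" and ratio: "\<And>j. x < real j \<Longrightarrow> bin_pmf l (Suc j) \<le> \<rho> * bin_pmf l j"
  shows "tail_gt l (x + 1) \<le> \<rho> * tail_gt l x"
proof -
  have "{k. k \<le> l \<and> x + 1 < real k} = Suc ` {j. Suc j \<le> l \<and> x < real j}"
  proof (intro set_eqI iffI)
    fix k assume k: "k \<in> {k. k \<le> l \<and> x + 1 < real k}"
    then obtain j where "k = Suc j" using \<open>x \<ge> 0\<close> by (cases k) auto
    then show "k \<in> Suc ` {j. Suc j \<le> l \<and> x < real j}" using k by auto
  qed auto
  then have "tail_gt l (x + 1) = (\<Sum>j\<in>{j. Suc j \<le> l \<and> x < real j}. bin_pmf l (Suc j))"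
    unfolding tail_gt_def by (simp add: sum.reindex)
  also have "\<dots> \<le> (\<Sum>j\<in>{j. Suc j \<le> l \<and> x < real j}. \<rho> * bin_pmf l j)"
    by (intro sum_mono ratio) auto
  also have "\<dots> \<le> (\<Sum>j\<in>{j. j \<le> l \<and> x < real j}. \<rho> * bin_pmf l j)"
    using assms(2) by (intro sum_mono2) (auto intro!: mult_nonneg_nonneg bin_pmf_nonneg)
  also have "\<dots> = \<rho> * tail_gt l x"
    unfolding tail_gt_def by (simp add: sum_distrib_left)
  finally show ?thesis .
qed

lemma tail_gt_add_le:
  assumes "x \<ge> 0" "\<rho> \<ge> 0" and ratio: "\<And>j. x < real j \<Longrightarrow> bin_pmf l (Suc j) \<le> \<rho> * bin_pmf l j"
  shows "tail_gt l (x + real D) \<le> \<rho> ^ D * tail_gt l x"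
proof (induction D)
  case 0
  then show ?case by simp
next
  case (Suc D)
  have "tail_gt l (x + real (Suc D)) = tail_gt l ((x + real D) + 1)"
    by (simp add: algebra_simps)
  also have "\<dots> \<le> \<rho> * tail_gt l (x + real D)"
    using assms by (intro tail_gt_add_one_le) auto
  also have "\<dots> \<le> \<rho> * (\<rho> ^ D * tail_gt l x)"
    using Suc \<open>\<rho> \<ge> 0\<close> by (intro mult_left_mono) auto
  finally show ?case by simp
qed

lemma bin_pmf_add_ge:
  assumes "\<rho> \<ge> 0" and ratio: "\<And>j. k \<le> j \<Longrightarrow> j < k + i \<Longrightarrow> \<rho> * bin_pmf l j \<le> bin_pmf l (Suc j)"
  shows "\<rho> ^ i * bin_pmf l k \<le> bin_pmf l (k + i)"
  using ratio
proof (induction i)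
  case 0
  then show ?case by simp
next
  case (Suc i)
  have "\<rho> ^ Suc i * bin_pmf l k \<le> \<rho> * bin_pmf l (k + i)"
    using Suc \<open>\<rho> \<ge> 0\<close> by (simp add: mult.assoc mult_left_mono)
  also have "\<dots> \<le> bin_pmf l (Suc (k + i))"
    using Suc.prems by simp
  finally show ?case by simp
qed

text \<open>Up to distance \<open>J\<close> to the right of \<open>k\<close> the ratio of consecutive probabilities stays
  above some \<open>\<rho>\<close> with \<open>\<rho> ^ J \<ge> 1/2\<close>.\<close>
lemma bin_pmf_add_ge_half:
  assumes kl: "real l / 2 \<le> real k" and J: "8 * real J * ((real k - real l / 2) + real J) \<le> real l"
    and "i \<le> J"
  shows "bin_pmf l k / 2 \<le> bin_pmf l (k + i)"
proof (cases "i = 0")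
  case True
  then show ?thesis by (simp add: bin_pmf_nonneg)
next
  case False
  define t where "t = real k - real l / 2"
  have "J \<ge> 1" "t \<ge> 0" using False \<open>i \<le> J\<close> kl by (auto simp: t_def)
  then have "8 * (t + real J) \<le> 8 * real J * (t + real J)"
    by (intro mult_right_mono) auto
  then have tJ: "t + real J \<le> real l / 8" using J by (simp add: t_def)
  have kJ: "real k + real J > 0" using \<open>J \<ge> 1\<close> by simp
  define \<rho> where "\<rho> = (real l - real k - real J) / (real k + real J)"
  have \<rho>0: "\<rho> \<ge> 0" unfolding \<rho>_def using tJ kJ by (intro divide_nonneg_pos) (auto simp: t_def)
  have "1 - \<rho> = (2 * real k + 2 * real J - real l) / (real k + real J)"
    unfolding \<rho>_def using kJ by (simp add: field_simps)
  also have "\<dots> \<le> (2 * real k + 2 * real J - real l) / (real l / 2)"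
    using kJ kl tJ \<open>t \<ge> 0\<close> by (intro divide_left_mono) (auto simp: t_def)
  also have "\<dots> = 4 * (t + real J) / real l"
    using tJ \<open>J \<ge> 1\<close> \<open>t \<ge> 0\<close> unfolding t_def by (simp add: field_simps)
  finally have one_minus: "1 - \<rho> \<le> 4 * (t + real J) / real l" .
  have \<rho>1: "\<rho> \<le> 1" unfolding \<rho>_def using kl kJ by (simp add: divide_le_eq_1)
  have "1 - real i * (1 - \<rho>) \<le> \<rho> ^ i"
    using Bernoulli_inequality[of "\<rho> - 1" i] \<rho>0 by (simp add: algebra_simps)
  moreover have "real i * (1 - \<rho>) \<le> real J * (4 * (t + real J) / real l)"
    using one_minus \<open>i \<le> J\<close> \<rho>1 by (intro mult_mono) auto
  moreover have "real J * (4 * (t + real J) / real l) \<le> 1/2"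
    using J tJ kJ by (simp add: t_def field_simps)
  ultimately have "1/2 \<le> \<rho> ^ i" by linarith
  then have "bin_pmf l k / 2 \<le> \<rho> ^ i * bin_pmf l k"
    using mult_right_mono[OF \<open>1/2 \<le> \<rho> ^ i\<close> bin_pmf_nonneg[of l k]] by simp
  also have "\<dots> \<le> bin_pmf l (k + i)"
  proof (rule bin_pmf_add_ge[OF \<rho>0], rule bin_pmf_Suc_ge)
    fix j assume "k \<le> j" "j < k + i"
    then show "\<rho> \<le> (real l - real j) / (real j + 1)"
      unfolding \<rho>_def using kJ tJ \<open>i \<le> J\<close> by (intro frac_le) (auto simp: t_def)
  qed
  finally show ?thesis .
qed

lemma bin_pmf_le_tail_gt:
  assumes "J \<ge> 1" "real l / 2 \<le> real k" and J: "8 * real J * ((real k - real l / 2) + real J) \<le> real l"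
  shows "bin_pmf l k \<le> 2 * tail_gt l (real k) / real J"
proof -
  have "8 * ((real k - real l / 2) + real J) \<le> 8 * real J * ((real k - real l / 2) + real J)"
    using assms(1,2) by (intro mult_right_mono) auto
  then have "8 * ((real k - real l / 2) + real J) \<le> real l" using J by (rule order_trans)
  then have "real k + real J \<le> real l" by (simp add: algebra_simps)
  then have "k + J \<le> l" by (metis of_nat_add of_nat_le_iff)
  have "real J * (bin_pmf l k / 2) = (\<Sum>i\<in>{1..J}. bin_pmf l k / 2)"
    by simp
  also have "\<dots> \<le> (\<Sum>i\<in>{1..J}. bin_pmf l (k + i))"
    using assms by (intro sum_mono bin_pmf_add_ge_half) auto
  also have "\<dots> = (\<Sum>j\<in>(\<lambda>i. k + i) ` {1..J}. bin_pmf l j)"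
    by (subst sum.reindex) auto
  also have "\<dots> \<le> tail_gt l (real k)"
    unfolding tail_gt_def using \<open>k + J \<le> l\<close> by (intro sum_mono2) (auto intro: bin_pmf_nonneg)
  finally show ?thesis using assms(1) by (simp add: field_simps)
qed

lemma tail_gt_add_le_exp:
  assumes l: "real l \<ge> 1" and q: "real l / 2 \<le> q" "q \<le> real l"
  shows "tail_gt l (q + real D) \<le> exp (- (q - real l / 2) * real D / real l) * tail_gt l q"
proof -
  define t where "t = q - real l / 2"
  have t: "0 \<le> t" "t \<le> real l / 2" using q by (auto simp: t_def)
  define \<rho> where "\<rho> = (real l - q) / (q + 1)"
  have q0: "q \<ge> 0" using q l by simp
  have \<rho>0: "\<rho> \<ge> 0" unfolding \<rho>_def using q0 q by simp
  have "tail_gt l (q + real D) \<le> \<rho> ^ D * tail_gt l q"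
    unfolding \<rho>_def using q0 q by (intro tail_gt_add_le bin_pmf_Suc_le frac_le) auto
  also have "\<rho> ^ D \<le> exp (- t / real l) ^ D"
  proof (rule power_mono[OF _ \<rho>0])
    have "(real l - q) * real l \<le> (real l - t) * (q + 1)"
    proof -
      have "t * t \<le> real l / 2 * t" using t by (intro mult_right_mono) auto
      moreover have "t \<le> real l * t" using t l by (simp add: mult_le_cancel_right1)
      ultimately show ?thesis unfolding t_def by (simp add: algebra_simps)
    qed
    then have "\<rho> \<le> (real l - t) / real l"
      unfolding \<rho>_def using l q0 by (simp add: field_simps)
    also have "\<dots> = 1 + (- t / real l)" using l by (simp add: field_simps)
    also have "\<dots> \<le> exp (- t / real l)" by (rule exp_ge_add_one_self)
    finally show "\<rho> \<le> exp (- t / real l)" .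
  qed
  also have "exp (- t / real l) ^ D = exp (- t * real D / real l)"
    by (simp add: exp_of_nat_mult[symmetric] mult.commute)
  finally show ?thesis using tail_gt_nonneg unfolding t_def by (simp add: mult_right_mono)
qed

lemma exp_le_one_minus_power:
  assumes "0 \<le> y" "y \<le> 1/2"
  shows "exp (- 2 * y * real s) \<le> (1 - y) ^ s"
proof -
  have "y * y \<le> y * (1/2)" using assms by (intro mult_left_mono) auto
  then have "- 2 * y \<le> ln (1 - y)"
    using ln_one_minus_pos_lower_bound[OF assms] by (simp add: power2_eq_square)
  then have "real s * (- 2 * y) \<le> real s * ln (1 - y)"
    by (rule mult_left_mono) simp
  then have "exp (- 2 * y * real s) \<le> exp (real s * ln (1 - y))"
    by (simp add: mult.commute)
  also have "\<dots> = (1 - y) ^ s"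
    using assms by (simp add: exp_of_nat_mult)
  finally show ?thesis .
qed

text \<open>On the window \<open>[l/2, l/2 + 2u + 1)\<close> the ratio of consecutive probabilities stays above
  \<open>1 - y\<close> with \<open>y = 2 (4 u + 3) / l\<close>.\<close>
lemma bin_pmf_shift_ge:
  assumes l: "real l \<ge> 1" and u: "u \<ge> 0" "4 * (4 * u + 3) \<le> real l"
    and k: "real l / 2 \<le> real k" "real k < real l / 2 + u" and s: "real s \<le> u + 1"
  shows "exp (- 16 * (u + 1)\<^sup>2 / real l) * bin_pmf l k \<le> bin_pmf l (k + s)"
proof -
  define y where "y = 2 * (4 * u + 3) / real l"
  have y: "0 \<le> y" "y \<le> 1/2" unfolding y_def using u l by (simp_all add: field_simps)
  have "2 * y * real s \<le> 2 * y * (u + 1)" using y s by (intro mult_left_mono) auto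
  also have "\<dots> \<le> 16 * (u + 1)\<^sup>2 / real l"
    unfolding y_def using u l by (simp add: field_simps power2_eq_square)
  finally have "exp (- 16 * (u + 1)\<^sup>2 / real l) \<le> exp (- 2 * y * real s)"
    by simp
  also have "\<dots> \<le> (1 - y) ^ s" by (rule exp_le_one_minus_power[OF y])
  finally have "exp (- 16 * (u + 1)\<^sup>2 / real l) * bin_pmf l k \<le> (1 - y) ^ s * bin_pmf l k"
    using bin_pmf_nonneg by (rule mult_right_mono)
  also have "\<dots> \<le> bin_pmf l (k + s)"
  proof (rule bin_pmf_add_ge, use y in simp, rule bin_pmf_Suc_ge)
    fix j assume "k \<le> j" "j < k + s"
    then have j: "real l / 2 \<le> real j" "real j < real l / 2 + 2 * u + 1"
      using k s by auto
    have "y * (real l / 2) \<le> y * (real j + 1)" using y j by (intro mult_left_mono) auto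
    moreover have "y * (real l / 2) = 4 * u + 3" unfolding y_def using l by simp
    ultimately have "(1 - y) * (real j + 1) \<le> real l - real j" using j by (simp add: algebra_simps)
    then show "1 - y \<le> (real l - real j) / (real j + 1)"
      by (simp add: le_divide_eq add_pos_nonneg)
  qed
  finally show ?thesis .
qed

text \<open>The central mass \<open>P(l/2 \<le> X < l/2 + u)\<close> is at least \<open>1/2 - exp (-2 u\<^sup>2/l)\<close>, and shifting it
  to the right by \<open>s \<approx> u\<close> loses at most the factor \<open>exp (-16 (u + 1)\<^sup>2 / l)\<close>.\<close>
lemma tail_gt_lower_bound:
  assumes l: "real l \<ge> 1" and u: "u \<ge> 0" "4 * (4 * u + 3) \<le> real l"
  shows "(1/2 - exp (- 2 * u\<^sup>2 / real l)) * exp (- 16 * (u + 1)\<^sup>2 / real l) \<le> tail_gt l (real l / 2 + u)"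
proof -
  define s where "s = nat \<lfloor>u\<rfloor> + 1"
  have s: "u < real s" "real s \<le> u + 1" unfolding s_def using u by linarith+
  define W where "W = {k. k \<le> l \<and> real l / 2 \<le> real k \<and> real k < real l / 2 + u}"
  define c where "c = exp (- 16 * (u + 1)\<^sup>2 / real l)"
  have W_eq: "W = {k. k \<le> l \<and> real l / 2 \<le> real k} - {k. k \<le> l \<and> real l / 2 + u \<le> real k}"
    unfolding W_def by auto
  have "(\<Sum>k\<in>W. bin_pmf l k) = tail_ge l (real l / 2) - tail_ge l (real l / 2 + u)"
    unfolding W_eq tail_ge_def using u by (subst sum_diff) auto
  moreover have "1/2 - exp (- 2 * u\<^sup>2 / real l) \<le> tail_ge l (real l / 2) - tail_ge l (real l / 2 + u)"
    using tail_ge_half[of l] tail_ge_hoeffding[of l u] u l by simp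
  ultimately have "c * (1/2 - exp (- 2 * u\<^sup>2 / real l)) \<le> c * (\<Sum>k\<in>W. bin_pmf l k)"
    unfolding c_def by (intro mult_left_mono) auto
  also have "\<dots> \<le> (\<Sum>k\<in>W. bin_pmf l (k + s))"
    unfolding sum_distrib_left c_def W_def using l u s by (intro sum_mono bin_pmf_shift_ge) auto
  also have "\<dots> = (\<Sum>j\<in>(\<lambda>k. k + s) ` W. bin_pmf l j)"
    by (subst sum.reindex) auto
  also have "\<dots> \<le> tail_gt l (real l / 2 + u)"
    unfolding tail_gt_def using s u unfolding W_def by (intro sum_mono2) (auto intro: bin_pmf_nonneg)
  finally show ?thesis unfolding c_def by (simp add: mult.commute)
qed

lemma tail_gt_sqrt_lower_bound:
  assumes l: "real l \<ge> 1" and M: "M \<ge> 1" "16 * M * sqrt (real l) + 12 \<le> real l"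
  shows "(1/2 - exp (-2)) * exp (- 16 * (M + 1)\<^sup>2) \<le> tail_gt l (real l / 2 + M * sqrt (real l))"
proof -
  define u where "u = M * sqrt (real l)"
  have u: "u \<ge> 0" "u\<^sup>2 / real l = M\<^sup>2" unfolding u_def using l M by (simp_all add: power_mult_distrib)
  have "u + 1 \<le> (M + 1) * sqrt (real l)"
    unfolding u_def using l by (simp add: algebra_simps)
  then have "(u + 1)\<^sup>2 \<le> (M + 1)\<^sup>2 * real l"
    using u l power_mono[of "u + 1" "(M + 1) * sqrt (real l)" 2] by (simp add: power_mult_distrib)
  then have e1: "exp (- 16 * (M + 1)\<^sup>2) \<le> exp (- 16 * (u + 1)\<^sup>2 / real l)"
    using l by (simp add: field_simps)
  have "- 2 * u\<^sup>2 / real l = - 2 * M\<^sup>2"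
    unfolding u(2)[symmetric] by simp
  also have "\<dots> \<le> -2" using M by simp
  finally have e2: "1/2 - exp (-2) \<le> 1/2 - exp (- 2 * u\<^sup>2 / real l)"
    by simp
  have "exp (-2::real) \<le> 1/2"
    using exp_ge_add_one_self[of "2::real"] by (simp add: exp_minus field_simps)
  then have "(1/2 - exp (-2)) * exp (- 16 * (M + 1)\<^sup>2) \<le>
      (1/2 - exp (- 2 * u\<^sup>2 / real l)) * exp (- 16 * (u + 1)\<^sup>2 / real l)"
    by (intro mult_mono[OF e2 e1]) (use e2 in linarith, simp)
  also have "\<dots> \<le> tail_gt l (real l / 2 + u)"
    using M u(1) unfolding u_def by (intro tail_gt_lower_bound[OF l]) auto
  finally show ?thesis unfolding u_def .
qed

lemma tail_gt_add_floor_le_exp: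
  assumes l: "real l \<ge> 1" and t: "0 \<le> t" "t \<le> real l / 2"
  shows "tail_gt l (real l / 2 + t + real (nat \<lfloor>eps * t / 2\<rfloor>))
    \<le> exp (1 - eps * (t\<^sup>2 / real l) / 2) * tail_gt l (real l / 2 + t)"
proof -
  define D where "D = nat \<lfloor>eps * t / 2\<rfloor>"
  have "eps * t / 2 - 1 < real D"
    unfolding D_def by linarith
  then have "t * (eps * t / 2 - 1) \<le> t * real D"
    using t by (intro mult_left_mono) auto
  then have "(eps * t\<^sup>2 / 2 - t) / real l \<le> t * real D / real l"
    using l by (intro divide_right_mono) (auto simp: algebra_simps power2_eq_square)
  moreover have "t / real l \<le> 1" using t l by simp
  moreover have "(eps * t\<^sup>2 / 2 - t) / real l = eps * (t\<^sup>2 / real l) / 2 - t / real l"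
    using l by (simp add: field_simps)
  ultimately have "- (t * real D / real l) \<le> 1 - eps * (t\<^sup>2 / real l) / 2"
    by linarith
  then have "exp (- t * real D / real l) \<le> exp (1 - eps * (t\<^sup>2 / real l) / 2)"
    by simp
  moreover have "tail_gt l (real l / 2 + t + real D) \<le> exp (- t * real D / real l) * tail_gt l (real l / 2 + t)"
    using tail_gt_add_le_exp[of l "real l / 2 + t" D] l t by simp
  ultimately show ?thesis
    unfolding D_def using tail_gt_nonneg by (meson mult_right_mono order_trans)
qed

section \<open>The uniform cube and the noise operator as product expectations\<close>

definition fair_coin :: "bool \<Rightarrow> real" where
  "fair_coin = (\<lambda>_. 1/2)"

definition noise_pair :: "real \<Rightarrow> bool \<times> bool \<Rightarrow> real" where
  "noise_pair eps = (\<lambda>c. noise_kernel eps (fst c) (snd c))"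

lemma sum_fair_coin: "sum fair_coin UNIV = 1"
  by (simp add: fair_coin_def UNIV_bool)

lemma sum_noise_pair: "sum (noise_pair eps) UNIV = 1"
  by (simp add: sum_UNIV_prod UNIV_bool noise_pair_def noise_kernel_def field_simps)

lemma noise_pair_fst: "(\<Sum>c\<in>{c. fst c = a}. noise_pair eps c) = fair_coin a"
proof -
  have "{c :: bool \<times> bool. fst c = a} = {(a,True),(a,False)}" by auto
  then show ?thesis by (simp add: noise_pair_def noise_kernel_def fair_coin_def field_simps)
qed

lemma noise_pair_snd: "(\<Sum>c\<in>{c. snd c = a}. noise_pair eps c) = fair_coin a"
proof -
  have "{c :: bool \<times> bool. snd c = a} = {(True,a),(False,a)}" by auto
  then show ?thesis by (simp add: noise_pair_def noise_kernel_def fair_coin_def field_simps)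
qed

lemma noise_pair_nonneg: "0 \<le> eps \<Longrightarrow> eps \<le> 1 \<Longrightarrow> noise_pair eps c \<ge> 0"
  by (simp add: noise_pair_def noise_kernel_def)

lemma prod_expect_noise_pair_fst:
  "finite I \<Longrightarrow> depends_on F I \<Longrightarrow>
    prod_expect (noise_pair eps) I (\<lambda>z. F (\<lambda>i. fst (z i))) = prod_expect fair_coin I F"
  by (rule prod_expect_map[OF noise_pair_fst])

lemma prod_expect_noise_pair_snd:
  "finite I \<Longrightarrow> depends_on F I \<Longrightarrow>
    prod_expect (noise_pair eps) I (\<lambda>z. F (\<lambda>i. snd (z i))) = prod_expect fair_coin I F"
  by (rule prod_expect_map[OF noise_pair_snd])

lemma expect_unif_eq_prod_expect: "expect_unif n g = prod_expect fair_coin {0..<n} g"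
  unfolding prod_expect_def expect_unif_def cube_def
  by (simp add: fair_coin_def sum_divide_distrib power_one_over)

lemma prob_unif_eq_prod_expect: "prob_unif n P = prod_expect fair_coin {0..<n} (\<lambda>x. of_bool (P x))"
proof -
  have "real (card {x\<in>cube n. P x}) = (\<Sum>x\<in>cube n. of_bool (P x))"
    by (simp add: cube_def finite_PiE Int_def)
  then have "prob_unif n P = expect_unif n (\<lambda>x. of_bool (P x))"
    unfolding prob_unif_def expect_unif_def by simp
  then show ?thesis by (simp add: expect_unif_eq_prod_expect)
qed

lemma bij_betw_unzip:
  "bij_betw (\<lambda>z. (restrict (\<lambda>i. fst (z i)) I, restrict (\<lambda>i. snd (z i)) I))
     (I \<rightarrow>\<^sub>E (UNIV :: ('a \<times> 'b) set)) ((I \<rightarrow>\<^sub>E UNIV) \<times> (I \<rightarrow>\<^sub>E UNIV))"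
proof (rule bij_betwI[where g="\<lambda>(x,y). restrict (\<lambda>i. (x i, y i)) I"])
  show "(\<lambda>(x, y). restrict (\<lambda>i. (x i, y i)) I) (restrict (\<lambda>i. fst (z i)) I, restrict (\<lambda>i. snd (z i)) I) = z"
    if "z \<in> I \<rightarrow>\<^sub>E UNIV" for z :: "_ \<Rightarrow> 'a \<times> 'b"
    using that by (auto simp: restrict_def PiE_def extensional_def fun_eq_iff)
  show "(restrict (\<lambda>i. fst ((\<lambda>(x, y). restrict (\<lambda>i. (x i, y i)) I) p i)) I,
         restrict (\<lambda>i. snd ((\<lambda>(x, y). restrict (\<lambda>i. (x i, y i)) I) p i)) I) = p"
    if "p \<in> (I \<rightarrow>\<^sub>E UNIV) \<times> (I \<rightarrow>\<^sub>E UNIV)" for p :: "(_ \<Rightarrow> 'a) \<times> (_ \<Rightarrow> 'b)"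
    using that by (cases p) (auto simp: restrict_def PiE_def extensional_def fun_eq_iff)
qed auto

lemma noise_corr_eq_prod_expect:
  assumes "depends_on (\<lambda>x. f x) {0..<n}"
  shows "noise_corr n eps f = prod_expect (noise_pair eps) {0..<n}
           (\<lambda>z. of_bool (f (\<lambda>i. fst (z i))) * of_bool (f (\<lambda>i. snd (z i))))"
proof -
  let ?I = "{0..<n}"
  let ?g = "\<lambda>(x,y). (\<Prod>i<n. noise_kernel eps (x i) (y i)) * of_bool (f x) * of_bool (f y)"
  have "noise_corr n eps f = (\<Sum>p\<in>cube n \<times> cube n. ?g p)"
    unfolding noise_corr_def by (simp add: sum.cartesian_product)
  also have "\<dots> = (\<Sum>z\<in>?I \<rightarrow>\<^sub>E UNIV. ?g (restrict (\<lambda>i. fst (z i)) ?I, restrict (\<lambda>i. snd (z i)) ?I))"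
    unfolding cube_def by (rule sum.reindex_bij_betw[OF bij_betw_unzip, symmetric])
  also have "\<dots> = prod_expect (noise_pair eps) ?I
      (\<lambda>z. of_bool (f (\<lambda>i. fst (z i))) * of_bool (f (\<lambda>i. snd (z i))))"
    unfolding prod_expect_def
  proof (intro sum.cong refl)
    fix z :: "nat \<Rightarrow> bool \<times> bool"
    have "f (restrict (\<lambda>i. fst (z i)) ?I) = f (\<lambda>i. fst (z i))"
         "f (restrict (\<lambda>i. snd (z i)) ?I) = f (\<lambda>i. snd (z i))"
      using assms unfolding depends_on_def by (metis restrict_apply')+
    then show "?g (restrict (\<lambda>i. fst (z i)) ?I, restrict (\<lambda>i. snd (z i)) ?I) =
        (\<Prod>i\<in>?I. noise_pair eps (z i)) * (of_bool (f (\<lambda>i. fst (z i))) * of_bool (f (\<lambda>i. snd (z i))))"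
      by (simp add: noise_pair_def lessThan_atLeast0)
  qed
  finally show ?thesis .
qed

lemma bij_betw_true_set:
  "bij_betw (\<lambda>z. {i\<in>B. z i}) (B \<rightarrow>\<^sub>E (UNIV :: bool set)) (Pow B)"
proof (rule bij_betwI[where g="\<lambda>A. restrict (\<lambda>i. i \<in> A) B"])
  show "restrict (\<lambda>i. i \<in> {i \<in> B. x i}) B = x" if "x \<in> B \<rightarrow>\<^sub>E UNIV" for x
    using that by (auto simp: restrict_def PiE_def extensional_def fun_eq_iff)
qed auto

lemma prod_expect_card:
  assumes B: "finite B"
  shows "prod_expect fair_coin B (\<lambda>z. g (card {i\<in>B. z i})) = (\<Sum>k\<le>card B. bin_pmf (card B) k * g k)"
proof -
  have "prod_expect fair_coin B (\<lambda>z. g (card {i\<in>B. z i})) =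
        (\<Sum>z\<in>B \<rightarrow>\<^sub>E UNIV. g (card {i\<in>B. z i})) / 2 ^ card B"
    unfolding prod_expect_def fair_coin_def by (simp add: sum_divide_distrib power_one_over)
  also have "(\<Sum>z\<in>B \<rightarrow>\<^sub>E UNIV. g (card {i\<in>B. z i})) = (\<Sum>A\<in>Pow B. g (card A))"
    by (rule sum.reindex_bij_betw[OF bij_betw_true_set])
  also have "\<dots> = (\<Sum>k\<in>{..card B}. \<Sum>A\<in>{x. x \<in> Pow B \<and> card x = k}. g (card A))"
    by (rule sum.group[symmetric]) (use B in \<open>auto intro: card_mono\<close>)
  also have "\<dots> = (\<Sum>k\<le>card B. real (card B choose k) * g k)"
  proof (intro sum.cong refl)
    fix k
    have "(\<Sum>A\<in>{x. x \<in> Pow B \<and> card x = k}. g (card A)) = (\<Sum>A\<in>{x. x \<subseteq> B \<and> card x = k}. g k)"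
      by (intro sum.cong) auto
    then show "(\<Sum>A\<in>{x. x \<in> Pow B \<and> card x = k}. g (card A)) = real (card B choose k) * g k"
      using n_subsets[OF B, of k] by simp
  qed
  finally show ?thesis by (simp add: bin_pmf_def sum_divide_distrib)
qed

lemma sum_bin_pmf_of_bool:
  "(\<Sum>k\<le>l. bin_pmf l k * of_bool (P k)) = (\<Sum>k\<in>{k. k \<le> l \<and> P k}. bin_pmf l k)"
proof -
  have "(\<Sum>k\<in>{k. k \<le> l \<and> P k}. bin_pmf l k) = (\<Sum>k\<in>{k\<in>{..l}. P k}. bin_pmf l k)"
    by (intro sum.cong) auto
  also have "\<dots> = (\<Sum>k\<le>l. if P k then bin_pmf l k else 0)"
    by (rule sum.inter_filter) simp
  finally show ?thesis by (simp add: of_bool_def if_distrib cong: if_cong)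
qed

lemma prod_expect_card_gt:
  "finite B \<Longrightarrow> prod_expect fair_coin B (\<lambda>z. of_bool (q < real (card {i\<in>B. z i}))) = tail_gt (card B) q"
  unfolding tail_gt_def by (subst prod_expect_card) (simp_all add: sum_bin_pmf_of_bool)

lemma prod_expect_card_le:
  assumes "finite B"
  shows "prod_expect fair_coin B (\<lambda>z. of_bool (real (card {i\<in>B. z i}) \<le> q)) = 1 - tail_gt (card B) q"
proof -
  have "prod_expect fair_coin B (\<lambda>z. of_bool (real (card {i\<in>B. z i}) \<le> q)) =
        prod_expect fair_coin B (\<lambda>z. 1 - of_bool (q < real (card {i\<in>B. z i})))"
    by (intro prod_expect_cong) auto
  then show ?thesis
    using assms by (simp add: prod_expect_diff prod_expect_const sum_fair_coin prod_expect_card_gt)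
qed

lemma prod_expect_card_lt:
  assumes "finite B"
  shows "prod_expect fair_coin B (\<lambda>z. of_bool (real (card {i\<in>B. z i}) < q)) = 1 - tail_ge (card B) q"
proof -
  have "prod_expect fair_coin B (\<lambda>z. of_bool (q \<le> real (card {i\<in>B. z i}))) = tail_ge (card B) q"
    unfolding tail_ge_def by (subst prod_expect_card[OF assms]) (simp add: sum_bin_pmf_of_bool)
  moreover have "prod_expect fair_coin B (\<lambda>z. of_bool (real (card {i\<in>B. z i}) < q)) =
        prod_expect fair_coin B (\<lambda>z. 1 - of_bool (q \<le> real (card {i\<in>B. z i})))"
    by (intro prod_expect_cong) auto
  ultimately show ?thesis
    using assms by (simp add: prod_expect_diff prod_expect_const sum_fair_coin)
qed

section \<open>Noise on a single tribe\<close>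

definition prob_both_le :: "real \<Rightarrow> nat set \<Rightarrow> real \<Rightarrow> real" where
  "prob_both_le eps B q = prod_expect (noise_pair eps) B
     (\<lambda>z. of_bool (real (card {i\<in>B. fst (z i)}) \<le> q) * of_bool (real (card {i\<in>B. snd (z i)}) \<le> q))"

definition prob_both_gt :: "real \<Rightarrow> nat set \<Rightarrow> real \<Rightarrow> real" where
  "prob_both_gt eps B q = prod_expect (noise_pair eps) B
     (\<lambda>z. of_bool (q < real (card {i\<in>B. fst (z i)})) * of_bool (q < real (card {i\<in>B. snd (z i)})))"

lemma prob_both_le_nonneg: "0 \<le> eps \<Longrightarrow> eps \<le> 1 \<Longrightarrow> prob_both_le eps B q \<ge> 0"
  unfolding prob_both_le_def by (intro prod_expect_nonneg noise_pair_nonneg) auto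

lemma prob_both_gt_nonneg: "0 \<le> eps \<Longrightarrow> eps \<le> 1 \<Longrightarrow> prob_both_gt eps B q \<ge> 0"
  unfolding prob_both_gt_def by (intro prod_expect_nonneg noise_pair_nonneg) auto

lemma prob_both_le_le_one:
  assumes "finite B" "0 \<le> eps" "eps \<le> 1"
  shows "prob_both_le eps B q \<le> 1"
proof -
  have "prob_both_le eps B q \<le> prod_expect (noise_pair eps) B (\<lambda>_. 1)"
    unfolding prob_both_le_def using assms by (intro prod_expect_mono noise_pair_nonneg) auto
  then show ?thesis using prod_expect_const[OF assms(1) sum_noise_pair] by simp
qed

lemma prob_both_le_eq:
  assumes "finite B"
  shows "prob_both_le eps B q = 1 - 2 * tail_gt (card B) q + prob_both_gt eps B q"
proof -
  let ?gt = "\<lambda>x. of_bool (q < real (card {i\<in>B. x i})) :: real"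
  have dep: "depends_on ?gt B"
    by (rule depends_on_card)
  have "prob_both_le eps B q = prod_expect (noise_pair eps) B
      (\<lambda>z. 1 - ?gt (\<lambda>i. fst (z i)) - ?gt (\<lambda>i. snd (z i)) + ?gt (\<lambda>i. fst (z i)) * ?gt (\<lambda>i. snd (z i)))"
    unfolding prob_both_le_def by (intro prod_expect_cong) auto
  also have "\<dots> = prod_expect (noise_pair eps) B (\<lambda>_. 1) - prod_expect fair_coin B ?gt
      - prod_expect fair_coin B ?gt + prob_both_gt eps B q"
    unfolding prob_both_gt_def
    by (simp add: prod_expect_add prod_expect_diff prod_expect_noise_pair_fst[OF assms dep]
        prod_expect_noise_pair_snd[OF assms dep])
  finally show ?thesis
    using assms by (simp add: prod_expect_const sum_noise_pair prod_expect_card_gt)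
qed

text \<open>Given \<open>\<omega>\<^sub>i\<close>, the bit \<open>\<omega>\<^sup>\<epsilon>\<^sub>i\<close> has mean \<open>(1 - \<epsilon>) \<omega>\<^sub>i + \<epsilon>/2\<close> and
  variance \<open>(\<epsilon>/2) (1 - \<epsilon>/2)\<close>.\<close>
definition noise_residual :: "real \<Rightarrow> bool \<times> bool \<Rightarrow> real" where
  "noise_residual eps c = of_bool (snd c) - (1 - eps) * of_bool (fst c) - eps / 2"

lemma noise_residual_cond_mean:
  "(\<Sum>b\<in>UNIV. noise_pair eps (a,b) * noise_residual eps (a,b)) = 0 * (\<Sum>b\<in>UNIV. noise_pair eps (a,b))"
  by (cases a) (simp_all add: UNIV_bool noise_pair_def noise_kernel_def noise_residual_def field_simps)

lemma noise_residual_cond_var: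
  "(\<Sum>b\<in>UNIV. noise_pair eps (a,b) * (noise_residual eps (a,b))\<^sup>2) =
     ((eps/2) * (1 - eps/2)) * (\<Sum>b\<in>UNIV. noise_pair eps (a,b))"
  by (cases a)
    (simp_all add: UNIV_bool noise_pair_def noise_kernel_def noise_residual_def field_simps power2_eq_square)

lemma sum_noise_residual:
  assumes "finite B"
  shows "(\<Sum>i\<in>B. noise_residual eps (z i)) =
    real (card {i\<in>B. snd (z i)}) - (1 - eps) * real (card {i\<in>B. fst (z i)}) - eps * (real (card B) / 2)"
  using assms by (simp add: noise_residual_def sum_subtractf sum_distrib_left Int_def)

lemma prod_expect_tail_mult_residual_sq:
  assumes B: "finite B"
  shows "prod_expect (noise_pair eps) B
      (\<lambda>z. of_bool (q < real (card {i\<in>B. fst (z i)})) * (\<Sum>i\<in>B. noise_residual eps (z i))\<^sup>2)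
    = real (card B) * ((eps/2) * (1 - eps/2)) * tail_gt (card B) q"
proof -
  let ?gt = "\<lambda>z. of_bool (q < real (card {i\<in>B. fst (z i)})) :: real"
  let ?r = "noise_residual eps"
  have gt_upd: "?gt (z(i:=(a,b))) = ?gt (z(i:=(a,b')))" for z :: "nat \<Rightarrow> bool \<times> bool" and i a b b'
    by (intro arg_cong[where f="\<lambda>S. of_bool (q < real (card S))"]) auto
  have summand: "prod_expect (noise_pair eps) B (\<lambda>z. ?gt z * ?r (z j) * ?r (z i)) =
      (if i = j then (eps/2) * (1 - eps/2) * tail_gt (card B) q else 0)" if "i \<in> B" "j \<in> B" for i j
  proof (cases "i = j")
    case True
    have "prod_expect (noise_pair eps) B (\<lambda>z. ?gt z * (?r (z i))\<^sup>2) =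
        (eps/2) * (1 - eps/2) * prod_expect (noise_pair eps) B ?gt"
      by (rule prod_expect_mult_cond_const[where F="?gt", OF B \<open>i \<in> B\<close> noise_residual_cond_var gt_upd])
    also have "prod_expect (noise_pair eps) B ?gt = tail_gt (card B) q"
      using prod_expect_noise_pair_fst[OF B depends_on_card[of "\<lambda>k. of_bool (q < real k)"]]
        prod_expect_card_gt[OF B] by simp
    finally show ?thesis using True by (simp add: power2_eq_square mult_ac)
  next
    case False
    have "prod_expect (noise_pair eps) B (\<lambda>z. (?gt z * ?r (z j)) * ?r (z i)) =
        0 * prod_expect (noise_pair eps) B (\<lambda>z. ?gt z * ?r (z j))"
      using gt_upd False by (intro prod_expect_mult_cond_const[OF B \<open>i \<in> B\<close> noise_residual_cond_mean])
        simp
    then show ?thesis using False by simp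
  qed
  have square: "g * (\<Sum>i\<in>B. f i)\<^sup>2 = (\<Sum>i\<in>B. \<Sum>j\<in>B. g * f j * f i)" for g :: real and f
    by (simp add: power2_eq_square sum_product sum_distrib_left mult_ac)
  have "prod_expect (noise_pair eps) B (\<lambda>z. ?gt z * (\<Sum>i\<in>B. ?r (z i))\<^sup>2)
      = prod_expect (noise_pair eps) B (\<lambda>z. \<Sum>i\<in>B. \<Sum>j\<in>B. ?gt z * ?r (z j) * ?r (z i))"
    by (intro prod_expect_cong square)
  also have "\<dots> = (\<Sum>i\<in>B. \<Sum>j\<in>B. prod_expect (noise_pair eps) B (\<lambda>z. ?gt z * ?r (z j) * ?r (z i)))"
    using B by (simp add: prod_expect_sum)
  also have "\<dots> = (\<Sum>i\<in>B. (eps/2) * (1 - eps/2) * tail_gt (card B) q)"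
    using B by (simp add: summand cong: sum.cong)
  finally show ?thesis by simp
qed

text \<open>If both counts exceed \<open>q\<close> but the first one is at most \<open>q + d\<close>, then the residual
  \<open>y - (1 - e) x - e s\<close> exceeds \<open>T\<close>.\<close>
lemma both_gt_le_chebyshev:
  fixes x y q d T e s :: real
  assumes "0 < T" "0 \<le> e" "e \<le> 1" and T: "T \<le> e * (q - s) - (1 - e) * d"
  shows "of_bool (q < x) * of_bool (q < y) \<le>
    of_bool (q + d < x) + of_bool (q < x) * (y - (1 - e) * x - e * s)\<^sup>2 / T\<^sup>2"
proof (cases "q + d < x \<or> \<not> (q < x \<and> q < y)")
  case True
  then show ?thesis by auto
next
  case False
  then have "(1 - e) * x \<le> (1 - e) * (q + d)" "q < x" "q < y"
    using assms by (auto intro: mult_left_mono)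
  then have "T < y - (1 - e) * x - e * s"
    using T by (simp add: algebra_simps)
  then have "T\<^sup>2 \<le> (y - (1 - e) * x - e * s)\<^sup>2"
    using \<open>0 < T\<close> by (intro power_mono) auto
  then show ?thesis using \<open>0 < T\<close> \<open>q < x\<close> \<open>q < y\<close> by simp
qed

lemma prob_both_gt_le:
  assumes B: "finite B" and eps: "0 < eps" "eps < 1" and T: "0 < T"
    "T \<le> eps * (q - real (card B) / 2) - (1 - eps) * d"
  shows "prob_both_gt eps B q \<le> tail_gt (card B) (q + d) + tail_gt (card B) q * real (card B) / (4 * T\<^sup>2)"
proof -
  let ?X = "\<lambda>z. real (card {i\<in>B. fst (z i)})"
  let ?R = "\<lambda>z. (\<Sum>i\<in>B. noise_residual eps (z i))"
  have "prob_both_gt eps B q \<le>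
      prod_expect (noise_pair eps) B (\<lambda>z. of_bool (q + d < ?X z) + of_bool (q < ?X z) * (?R z)\<^sup>2 / T\<^sup>2)"
    unfolding prob_both_gt_def sum_noise_residual[OF B] using eps T
    by (intro prod_expect_mono noise_pair_nonneg both_gt_le_chebyshev) auto
  also have "\<dots> = tail_gt (card B) (q + d) +
      real (card B) * ((eps/2) * (1 - eps/2)) * tail_gt (card B) q / T\<^sup>2"
    using prod_expect_cmult[of "noise_pair eps" B "1 / T\<^sup>2" "\<lambda>z. of_bool (q < ?X z) * (?R z)\<^sup>2"]
      prod_expect_noise_pair_fst[OF B depends_on_card[of "\<lambda>k. of_bool (q + d < real k)"]]
    by (simp add: prod_expect_add prod_expect_card_gt[OF B] prod_expect_tail_mult_residual_sq[OF B])
  also have "\<dots> \<le> tail_gt (card B) (q + d) + real (card B) * (1/4) * tail_gt (card B) q / T\<^sup>2"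
  proof -
    have "(eps/2) * (1 - eps/2) = 1/4 - (eps/2 - 1/2)\<^sup>2"
      by (simp add: power2_eq_square algebra_simps)
    then have "(eps/2) * (1 - eps/2) \<le> 1/4" by simp
    then show ?thesis
      by (intro add_left_mono divide_right_mono mult_right_mono mult_left_mono tail_gt_nonneg) auto
  qed
  finally show ?thesis by (simp add: mult.commute)
qed

section \<open>Tribes\<close>

definition tribe_block :: "nat \<Rightarrow> nat \<Rightarrow> nat set" where
  "tribe_block l j = {j * l..<(j + 1) * l}"

definition tribe_le :: "nat \<Rightarrow> real \<Rightarrow> nat \<Rightarrow> (nat \<Rightarrow> bool) \<Rightarrow> real" where
  "tribe_le l q j x = of_bool (real (card {i\<in>tribe_block l j. x i}) \<le> q)"

lemma finite_tribe_block: "finite (tribe_block l j)"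
  by (simp add: tribe_block_def)

lemma card_tribe_block: "card (tribe_block l j) = l"
  by (simp add: tribe_block_def algebra_simps)

lemma tribe_blocks_disjoint:
  assumes "j \<noteq> j'"
  shows "tribe_block l j \<inter> tribe_block l j' = {}"
proof -
  have "j + 1 \<le> j' \<or> j' + 1 \<le> j" using assms by auto
  then show ?thesis
  proof
    assume "j + 1 \<le> j'"
    then have "(j + 1) * l \<le> j' * l" by (rule mult_right_mono) simp
    then show ?thesis by (auto simp: tribe_block_def)
  next
    assume "j' + 1 \<le> j"
    then have "(j' + 1) * l \<le> j * l" by (rule mult_right_mono) simp
    then show ?thesis by (auto simp: tribe_block_def)
  qed
qed

lemma tribe_block_subset:
  assumes "j < tribe_num lam n"
  shows "tribe_block (tribe_len lam n) j \<subseteq> {0..<n}"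
proof -
  have "(j + 1) * tribe_len lam n \<le> tribe_num lam n * tribe_len lam n"
    using assms by (intro mult_right_mono) auto
  also have "\<dots> \<le> n"
    unfolding tribe_num_def by (rule div_times_less_eq_dividend)
  finally show ?thesis by (auto simp: tribe_block_def)
qed

lemma tribe_sum_eq_card: "tribe_sum lam n x j = card {i\<in>tribe_block (tribe_len lam n) j. x i}"
  by (simp add: tribe_sum_def tribe_block_def)

lemma of_bool_ball_lessThan: "of_bool (\<forall>j\<in>{..<m}. P j) = (\<Prod>j<m. of_bool (P j) :: real)" for m :: nat
  by (induction m) (auto simp: lessThan_Suc)

lemma depends_on_tribe_max: "depends_on (\<lambda>x. g (tribe_max lam n x)) {0..<n}"
  unfolding depends_on_def
proof (intro allI impI)
  fix x x' :: "nat \<Rightarrow> bool" assume same: "\<forall>j\<in>{0..<n}. x j = x' j"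
  have "tribe_sum lam n x j = tribe_sum lam n x' j" if "j < tribe_num lam n" for j
    using tribe_block_subset[OF that] same unfolding tribe_sum_eq_card
    by (intro arg_cong[where f=card] Collect_cong) auto
  then have "tribe_sum lam n x ` {..<tribe_num lam n} = tribe_sum lam n x' ` {..<tribe_num lam n}"
    by (intro image_cong) auto
  then show "g (tribe_max lam n x) = g (tribe_max lam n x')" by (simp add: tribe_max_def)
qed

locale tribes =
  fixes lam :: real and n :: nat
  assumes tribes_nonempty: "1 \<le> tribe_num lam n"
begin

abbreviation "l \<equiv> tribe_len lam n"
abbreviation "m \<equiv> tribe_num lam n"

lemma real_tribe_max: "real (tribe_max lam n x) = Max ((\<lambda>j. real (tribe_sum lam n x j)) ` {..<m})"
  unfolding tribe_max_def using tribes_nonempty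
  by (subst mono_Max_commute[where f=real]) (auto simp: mono_def image_image lessThan_empty_iff)

lemma of_bool_not_tribe_max_gt:
  "of_bool (\<not> q < real (tribe_max lam n x)) = (\<Prod>j<m. tribe_le l q j x)"
  unfolding tribe_le_def of_bool_ball_lessThan[symmetric] using tribes_nonempty
  by (simp add: not_less real_tribe_max tribe_sum_eq_card lessThan_empty_iff)

lemma of_bool_tribe_max_gt:
  "of_bool (q < real (tribe_max lam n x)) = 1 - (\<Prod>j<m. tribe_le l q j x)"
  using of_bool_not_tribe_max_gt[of q x] unfolding of_bool_not_iff by linarith

lemma prod_expect_prod_tribes:
  fixes F :: "nat \<Rightarrow> (nat \<Rightarrow> 'a::finite) \<Rightarrow> real"
  assumes "sum w UNIV = 1" "\<And>j. j < m \<Longrightarrow> depends_on (F j) (tribe_block l j)"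
  shows "prod_expect w {0..<n} (\<lambda>z. \<Prod>j<m. F j z) = (\<Prod>j<m. prod_expect w (tribe_block l j) (F j))"
  using assms tribe_block_subset tribe_blocks_disjoint by (intro prod_expect_prod_disjoint) auto

lemma depends_on_prod_tribe_le: "depends_on (\<lambda>x. \<Prod>j<m. tribe_le l q j x) {0..<n}"
  unfolding tribe_le_def using tribe_block_subset
  by (intro depends_on_prod[where B="tribe_block l"] depends_on_card) auto

lemma prod_expect_prod_tribe_le:
  "prod_expect fair_coin {0..<n} (\<lambda>x. \<Prod>j<m. tribe_le l q j x) = (1 - tail_gt l q) ^ m"
proof -
  have "prod_expect fair_coin {0..<n} (\<lambda>x. \<Prod>j<m. tribe_le l q j x) =
      (\<Prod>j<m. prod_expect fair_coin (tribe_block l j) (tribe_le l q j))"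
    unfolding tribe_le_def by (intro prod_expect_prod_tribes sum_fair_coin depends_on_card)
  also have "\<dots> = (\<Prod>j<m. 1 - tail_gt l q)"
    unfolding tribe_le_def
    by (intro prod.cong refl) (simp add: prod_expect_card_le finite_tribe_block card_tribe_block)
  finally show ?thesis by simp
qed

lemma prob_not_tribe_max_gt:
  "prob_unif n (\<lambda>x. \<not> q < real (tribe_max lam n x)) = (1 - tail_gt l q) ^ m"
  unfolding prob_unif_eq_prod_expect by (simp only: of_bool_not_tribe_max_gt prod_expect_prod_tribe_le)

lemma prob_tribe_max_less:
  "prob_unif n (\<lambda>x. real (tribe_max lam n x) < q) = (1 - tail_ge l q) ^ m"
proof -
  let ?lt = "\<lambda>j x. of_bool (real (card {i\<in>tribe_block l j. x i}) < q) :: real"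
  have "prob_unif n (\<lambda>x. real (tribe_max lam n x) < q) = prod_expect fair_coin {0..<n} (\<lambda>x. \<Prod>j<m. ?lt j x)"
    unfolding prob_unif_eq_prod_expect of_bool_ball_lessThan[symmetric] using tribes_nonempty
    by (simp add: real_tribe_max tribe_sum_eq_card lessThan_empty_iff)
  also have "\<dots> = (\<Prod>j<m. prod_expect fair_coin (tribe_block l j) (?lt j))"
    by (intro prod_expect_prod_tribes sum_fair_coin depends_on_card)
  also have "\<dots> = (\<Prod>j<m. 1 - tail_ge l q)"
    by (intro prod.cong refl) (simp add: prod_expect_card_lt finite_tribe_block card_tribe_block)
  finally show ?thesis by simp
qed

lemma expect_tribe_max_gt:
  "expect_unif n (\<lambda>x. of_bool (q < real (tribe_max lam n x))) = 1 - (1 - tail_gt l q) ^ m"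
  by (simp add: expect_unif_eq_prod_expect of_bool_tribe_max_gt prod_expect_diff prod_expect_const
      sum_fair_coin prod_expect_prod_tribe_le)

lemma noise_cov_tribe_max_eq:
  "noise_corr n eps (\<lambda>x. q < real (tribe_max lam n x)) -
     (expect_unif n (\<lambda>x. of_bool (q < real (tribe_max lam n x))))\<^sup>2
   = (\<Prod>j<m. prob_both_le eps (tribe_block l j) q) - (1 - tail_gt l q) ^ (2 * m)"
proof -
  let ?G = "\<lambda>x. \<Prod>j<m. tribe_le l q j x"
  have "noise_corr n eps (\<lambda>x. q < real (tribe_max lam n x)) =
     prod_expect (noise_pair eps) {0..<n} (\<lambda>z. (1 - ?G (\<lambda>i. fst (z i))) * (1 - ?G (\<lambda>i. snd (z i))))"
    by (subst noise_corr_eq_prod_expect[OF depends_on_tribe_max]) (simp add: of_bool_tribe_max_gt)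
  also have "\<dots> = prod_expect (noise_pair eps) {0..<n} (\<lambda>z. 1 - ?G (\<lambda>i. fst (z i)) - ?G (\<lambda>i. snd (z i)) +
        (\<Prod>j<m. tribe_le l q j (\<lambda>i. fst (z i)) * tribe_le l q j (\<lambda>i. snd (z i))))"
    by (intro prod_expect_cong) (simp add: algebra_simps prod.distrib)
  also have "\<dots> = 1 - 2 * (1 - tail_gt l q) ^ m + (\<Prod>j<m. prob_both_le eps (tribe_block l j) q)"
  proof -
    have "prod_expect (noise_pair eps) {0..<n} (\<lambda>z. ?G (\<lambda>i. fst (z i))) = (1 - tail_gt l q) ^ m"
         "prod_expect (noise_pair eps) {0..<n} (\<lambda>z. ?G (\<lambda>i. snd (z i))) = (1 - tail_gt l q) ^ m"
      using prod_expect_noise_pair_fst[where F="?G", OF _ depends_on_prod_tribe_le]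
        prod_expect_noise_pair_snd[where F="?G", OF _ depends_on_prod_tribe_le]
      by (simp_all add: prod_expect_prod_tribe_le)
    moreover have "prod_expect (noise_pair eps) {0..<n}
        (\<lambda>z. \<Prod>j<m. tribe_le l q j (\<lambda>i. fst (z i)) * tribe_le l q j (\<lambda>i. snd (z i)))
      = (\<Prod>j<m. prob_both_le eps (tribe_block l j) q)"
      unfolding prob_both_le_def tribe_le_def
      by (rule prod_expect_prod_tribes[OF sum_noise_pair], unfold depends_on_def)
        (intro allI impI arg_cong2[where f="(*)"] arg_cong[where f="\<lambda>S. of_bool (real (card S) \<le> q)"]
          Collect_cong; auto)
    ultimately show ?thesis
      by (simp add: prod_expect_add prod_expect_diff prod_expect_const sum_noise_pair)
  qed
  finally have corr: "noise_corr n eps (\<lambda>x. q < real (tribe_max lam n x)) =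
      1 - 2 * (1 - tail_gt l q) ^ m + (\<Prod>j<m. prob_both_le eps (tribe_block l j) q)" .
  have "(1 - tail_gt l q) ^ (2 * m) = ((1 - tail_gt l q) ^ m)\<^sup>2"
    by (rule power_even_eq)
  then show ?thesis
    unfolding corr expect_tribe_max_gt by (simp add: power2_eq_square algebra_simps)
qed

lemma abs_noise_cov_tribe_max_le:
  assumes eps: "0 < eps" "eps < 1" and T: "0 < T" "T \<le> eps * (q - real l / 2) - (1 - eps) * d"
  shows "\<bar>noise_corr n eps (\<lambda>x. q < real (tribe_max lam n x)) -
     (expect_unif n (\<lambda>x. of_bool (q < real (tribe_max lam n x))))\<^sup>2\<bar>
   \<le> real m * (tail_gt l (q + d) + tail_gt l q * real l / (4 * T\<^sup>2) + (tail_gt l q)\<^sup>2)"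
proof -
  let ?G = "tail_gt l q"
  let ?c = "\<lambda>j. prob_both_le eps (tribe_block l j) q"
  have c: "\<bar>?c j\<bar> \<le> 1" for j
    using eps prob_both_le_nonneg prob_both_le_le_one[OF finite_tribe_block] by (simp add: abs_le_iff)
  have G: "\<bar>(1 - ?G)\<^sup>2\<bar> \<le> 1"
    using tail_gt_nonneg tail_gt_le_one by (simp add: abs_le_iff power_le_one)
  have each: "\<bar>?c j - (1 - ?G)\<^sup>2\<bar> \<le> tail_gt l (q + d) + ?G * real l / (4 * T\<^sup>2) + ?G\<^sup>2" for j
  proof -
    have "?c j - (1 - ?G)\<^sup>2 = prob_both_gt eps (tribe_block l j) q - ?G\<^sup>2"
      by (simp add: prob_both_le_eq finite_tribe_block card_tribe_block power2_eq_square algebra_simps)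
    moreover have "0 \<le> prob_both_gt eps (tribe_block l j) q"
      using eps by (intro prob_both_gt_nonneg) auto
    moreover have "prob_both_gt eps (tribe_block l j) q \<le> tail_gt l (q + d) + ?G * real l / (4 * T\<^sup>2)"
      using prob_both_gt_le[OF finite_tribe_block eps T(1)] T(2) by (simp add: card_tribe_block)
    moreover have "0 \<le> ?G\<^sup>2" by simp
    ultimately show ?thesis unfolding abs_le_iff by (intro conjI; linarith)
  qed
  have "norm ((\<Prod>j<m. ?c j) - (\<Prod>j<m. (1 - ?G)\<^sup>2)) \<le> (\<Sum>j<m. norm (?c j - (1 - ?G)\<^sup>2))"
    by (rule norm_prod_diff) (use c G in auto)
  then have "\<bar>(\<Prod>j<m. ?c j) - (\<Prod>j<m. (1 - ?G)\<^sup>2)\<bar> \<le> (\<Sum>j<m. \<bar>?c j - (1 - ?G)\<^sup>2\<bar>)"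
    by simp
  also have "\<dots> \<le> (\<Sum>j<m. tail_gt l (q + d) + ?G * real l / (4 * T\<^sup>2) + ?G\<^sup>2)"
    by (intro sum_mono each)
  also have "\<dots> = real m * (tail_gt l (q + d) + ?G * real l / (4 * T\<^sup>2) + ?G\<^sup>2)"
    by simp
  finally show ?thesis
    by (simp add: noise_cov_tribe_max_eq power_mult)
qed


lemma abs_noise_cov_tribe_max_le_exp:
  assumes l: "1 \<le> real l" and eps: "0 < eps" "eps < 1" and t: "0 < t" "t \<le> real l / 2"
    and q: "q = real l / 2 + t"
  shows "\<bar>noise_corr n eps (\<lambda>x. q < real (tribe_max lam n x)) -
     (expect_unif n (\<lambda>x. of_bool (q < real (tribe_max lam n x))))\<^sup>2\<bar>
   \<le> real m * (exp (1 - eps * (t\<^sup>2 / real l) / 2) * tail_gt l q + tail_gt l q * real l / (eps\<^sup>2 * t\<^sup>2)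
       + (tail_gt l q)\<^sup>2)"
proof -
  define D where "D = nat \<lfloor>eps * t / 2\<rfloor>"
  define T where "T = eps * t / 2"
  have T: "0 < T" unfolding T_def using eps t by simp
  have "0 \<le> \<lfloor>eps * t / 2\<rfloor>" using eps t by simp
  then have "real D = of_int \<lfloor>eps * t / 2\<rfloor>" unfolding D_def by simp
  then have "real D \<le> T" unfolding T_def by linarith
  moreover have "(1 - eps) * real D \<le> real D" using eps by (intro mult_left_le_one_le) auto
  moreover have "eps * (q - real l / 2) = eps * t" using q by simp
  ultimately have "T \<le> eps * (q - real l / 2) - (1 - eps) * real D"
    unfolding T_def by linarith
  then have "\<bar>noise_corr n eps (\<lambda>x. q < real (tribe_max lam n x)) -
      (expect_unif n (\<lambda>x. of_bool (q < real (tribe_max lam n x))))\<^sup>2\<bar>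
    \<le> real m * (tail_gt l (q + real D) + tail_gt l q * real l / (4 * T\<^sup>2) + (tail_gt l q)\<^sup>2)"
    by (rule abs_noise_cov_tribe_max_le[OF eps T])
  also have "\<dots> \<le> real m * (exp (1 - eps * (t\<^sup>2 / real l) / 2) * tail_gt l q
      + tail_gt l q * real l / (eps\<^sup>2 * t\<^sup>2) + (tail_gt l q)\<^sup>2)"
  proof -
    have "tail_gt l (q + real D) \<le> exp (1 - eps * (t\<^sup>2 / real l) / 2) * tail_gt l q"
      unfolding q D_def using l t by (intro tail_gt_add_floor_le_exp) auto
    moreover have "4 * T\<^sup>2 = eps\<^sup>2 * t\<^sup>2" unfolding T_def by (simp add: power2_eq_square)
    ultimately show ?thesis by (intro mult_left_mono add_mono) auto
  qed
  finally show ?thesis .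
qed

end

section \<open>Asymptotics along the sequence of tribe functions\<close>

lemma tribe_len_bounds:
  assumes "0 \<le> lam" "lam \<le> 1" "n \<ge> 1"
  shows "1 \<le> tribe_len lam n" "real (tribe_len lam n) \<le> real n powr lam"
    "real n powr lam - 1 < real (tribe_len lam n)"
proof -
  have "real n powr lam \<ge> 1" using assms by (intro ge_one_powr_ge_zero) auto
  then have "real (tribe_len lam n) = of_int \<lfloor>real n powr lam\<rfloor>" "\<lfloor>real n powr lam\<rfloor> \<ge> 1"
    unfolding tribe_len_def by auto
  then show "1 \<le> tribe_len lam n" "real (tribe_len lam n) \<le> real n powr lam"
      "real n powr lam - 1 < real (tribe_len lam n)"
    by linarith+
qed

lemma tribe_num_bounds:
  assumes "0 \<le> lam" "lam \<le> 1" "n \<ge> 1"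
  shows "1 \<le> tribe_num lam n" "real (tribe_num lam n) \<le> real n"
    "real n powr (1 - lam) - 1 \<le> real (tribe_num lam n)"
proof -
  note l = tribe_len_bounds[OF assms]
  have "real n powr lam \<le> real n"
    using assms powr_mono[of lam 1 "real n"] by simp
  then have "tribe_len lam n \<le> n" using l(2) by linarith
  then have "0 < n div tribe_len lam n" using l(1) by (simp add: div_greater_zero_iff)
  then show "1 \<le> tribe_num lam n" by (simp add: tribe_num_def)
  show "real (tribe_num lam n) \<le> real n" by (simp add: tribe_num_def)
  have "n < tribe_num lam n * tribe_len lam n + tribe_len lam n"
    using div_mult_mod_eq[of n "tribe_len lam n"] mod_less_divisor[of "tribe_len lam n" n] l(1)
    unfolding tribe_num_def by linarith
  then have "real n / real (tribe_len lam n) < real (tribe_num lam n) + 1"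
    using l(1) by (simp add: field_simps flip: of_nat_mult of_nat_add)
  moreover have "real n powr (1 - lam) \<le> real n / real (tribe_len lam n)"
    using l assms by (simp add: powr_diff divide_left_mono)
  ultimately show "real n powr (1 - lam) - 1 \<le> real (tribe_num lam n)" by linarith
qed

lemma mult_le_minus_ln_of_le_power:
  fixes p b :: real
  assumes "0 \<le> p" "p \<le> 1" "0 < b" "b \<le> (1 - p) ^ m"
  shows "real m * p \<le> - ln b"
proof -
  have "(1 - p) ^ m \<le> exp (- p) ^ m"
    using assms exp_ge_add_one_self[of "- p"] by (intro power_mono) auto
  then have "b \<le> exp (- (real m * p))"
    using assms by (simp add: exp_of_nat_mult[symmetric])
  then show ?thesis
    using assms ln_le_cancel_iff[of b "exp (- (real m * p))"] by simp
qed

lemma one_minus_le_mult_of_power_le: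
  fixes p b :: real
  assumes "0 \<le> p" "p \<le> 1" "(1 - p) ^ m \<le> b"
  shows "1 - b \<le> real m * p"
  using Bernoulli_inequality[of "- p" m] assms by simp

lemma abs_power_minus_le_of_between:
  fixes g h b :: real
  assumes "0 \<le> g" "g \<le> h" "h \<le> 1" "(1 - h) ^ m \<le> b" "b \<le> (1 - g) ^ m"
  shows "\<bar>(1 - g) ^ m - b\<bar> \<le> real m * (h - g)"
proof -
  have "\<bar>(1 - g) ^ m - (1 - h) ^ m\<bar> \<le> real m * \<bar>(1 - g) - (1 - h)\<bar>"
    using norm_power_diff[of "1 - g" "1 - h" m] assms by simp
  then show ?thesis using assms by (simp add: abs_le_iff)
qed

locale tribes_quantile =
  fixes lam beta :: real and q :: "nat \<Rightarrow> real"
  assumes lam: "0 < lam" "lam < 1" and beta: "0 < beta" "beta < 1"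
    and quantile: "\<And>n. is_quantile n (tribe_max lam n) beta (q n)"
begin

abbreviation "len n \<equiv> tribe_len lam n"
abbreviation "num n \<equiv> tribe_num lam n"

definition excess :: "nat \<Rightarrow> real" where
  "excess n = q n - real (len n) / 2"

lemma len_bounds: "n \<ge> 1 \<Longrightarrow> 1 \<le> len n" "n \<ge> 1 \<Longrightarrow> real (len n) \<le> real n powr lam"
  "n \<ge> 1 \<Longrightarrow> real n powr lam - 1 < real (len n)"
  using tribe_len_bounds[of lam n] lam by auto

lemma num_bounds: "n \<ge> 1 \<Longrightarrow> 1 \<le> num n" "n \<ge> 1 \<Longrightarrow> real (num n) \<le> real n"
  "n \<ge> 1 \<Longrightarrow> real n powr (1 - lam) - 1 \<le> real (num n)"
  using tribe_num_bounds[of lam n] lam by auto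

lemma tribes_of_ge_1: "n \<ge> 1 \<Longrightarrow> tribes lam n"
  by unfold_locales (rule num_bounds(1))

lemma quantile_tail_powers:
  assumes "n \<ge> 1"
  shows "beta \<le> (1 - tail_gt (len n) (q n)) ^ num n" "(1 - tail_ge (len n) (q n)) ^ num n \<le> beta"
proof -
  have "(\<lambda>x. real (tribe_max lam n x) \<le> q n) = (\<lambda>x. \<not> q n < real (tribe_max lam n x))"
    by (auto simp: not_less)
  then show "beta \<le> (1 - tail_gt (len n) (q n)) ^ num n" "(1 - tail_ge (len n) (q n)) ^ num n \<le> beta"
    using quantile[of n] tribes.prob_not_tribe_max_gt[OF tribes_of_ge_1[OF assms]]
      tribes.prob_tribe_max_less[OF tribes_of_ge_1[OF assms]]
    unfolding is_quantile_def by auto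
qed

lemma num_mult_tail_gt_le: "n \<ge> 1 \<Longrightarrow> real (num n) * tail_gt (len n) (q n) \<le> - ln beta"
  by (rule mult_le_minus_ln_of_le_power[OF tail_gt_nonneg tail_gt_le_one beta(1) quantile_tail_powers(1)])

lemma one_minus_beta_le_num_mult_tail_ge: "n \<ge> 1 \<Longrightarrow> 1 - beta \<le> real (num n) * tail_ge (len n) (q n)"
  by (rule one_minus_le_mult_of_power_le[OF tail_ge_nonneg tail_ge_le_one quantile_tail_powers(2)])

lemma filterlim_num: "filterlim (\<lambda>n. real (num n)) at_top sequentially"
proof (rule filterlim_at_top_mono)
  show "filterlim (\<lambda>n. real n powr (1 - lam) - 1) at_top sequentially" using lam by real_asymp
  show "\<forall>\<^sub>F n in sequentially. real n powr (1 - lam) - 1 \<le> real (num n)"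
    using eventually_ge_at_top[of 1] by eventually_elim (rule num_bounds(3))
qed

lemma filterlim_len: "filterlim (\<lambda>n. real (len n)) at_top sequentially"
proof (rule filterlim_at_top_mono)
  show "filterlim (\<lambda>n. real n powr lam - 1) at_top sequentially" using lam by real_asymp
  show "\<forall>\<^sub>F n in sequentially. real n powr lam - 1 \<le> real (len n)"
    using eventually_ge_at_top[of 1] by eventually_elim (use len_bounds(3) in force)
qed

text \<open>Otherwise \<open>tail_gt\<close> would be at least \<open>1/2\<close>, contradicting \<open>num n * tail_gt \<le> - ln beta\<close>.\<close>
lemma eventually_half_len_le_quantile: "\<forall>\<^sub>F n in sequentially. real (len n) / 2 \<le> q n"
  using filterlim_num[unfolded filterlim_at_top_dense, rule_format, of "- 2 * ln beta"]
    eventually_ge_at_top[of 1]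
proof eventually_elim
  case (elim n)
  show ?case
  proof (rule ccontr)
    assume "\<not> real (len n) / 2 \<le> q n"
    then have "tail_ge (len n) (real (len n) / 2) \<le> tail_gt (len n) (q n)"
      by (intro tail_ge_le_tail_gt) simp
    then have "1/2 \<le> tail_gt (len n) (q n)"
      using tail_ge_half[of "len n"] by linarith
    then have "real (num n) * (1/2) \<le> real (num n) * tail_gt (len n) (q n)"
      by (intro mult_left_mono) auto
    then show False using num_mult_tail_gt_le[OF elim(2)] elim(1) by simp
  qed
qed

lemma excess_sq_le:
  assumes n: "n \<ge> 1" and q: "real (len n) / 2 \<le> q n"
  shows "(excess n)\<^sup>2 \<le> real (len n) / 2 * ln (real n / (1 - beta))"
proof -
  have m: "real (num n) > 0" using num_bounds(1)[OF n] by simp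
  have "(1 - beta) / real (num n) \<le> tail_ge (len n) (real (len n) / 2 + excess n)"
    using one_minus_beta_le_num_mult_tail_ge[OF n] m by (simp add: excess_def field_simps)
  also have "\<dots> \<le> exp (- 2 * (excess n)\<^sup>2 / real (len n))"
    using len_bounds(1)[OF n] q by (intro tail_ge_hoeffding) (auto simp: excess_def)
  finally have "ln ((1 - beta) / real (num n)) \<le> - 2 * (excess n)\<^sup>2 / real (len n)"
    using beta m by (subst ln_exp[symmetric], subst ln_le_cancel_iff) auto
  then have "2 * (excess n)\<^sup>2 / real (len n) \<le> ln (real (num n) / (1 - beta))"
    using beta m by (simp add: ln_div)
  also have "\<dots> \<le> ln (real n / (1 - beta))"
    using num_bounds(2)[OF n] m beta by (subst ln_le_cancel_iff) (auto intro: divide_right_mono)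
  finally show ?thesis using len_bounds(1)[OF n] by (simp add: field_simps)
qed

lemma eventually_excess_le_half_len: "\<forall>\<^sub>F n in sequentially. excess n \<le> real (len n) / 2"
proof -
  have "\<forall>\<^sub>F n in sequentially. 2 * ln (real n / c) \<le> real n powr lam - 1" if "0 < c" for c
    using lam(1) that by real_asymp
  then have "\<forall>\<^sub>F n in sequentially. 2 * ln (real n / (1 - beta)) \<le> real n powr lam - 1"
    using beta by simp
  then show ?thesis using eventually_half_len_le_quantile eventually_ge_at_top[of 1]
  proof eventually_elim
    case (elim n)
    have "(excess n)\<^sup>2 \<le> real (len n) / 2 * ln (real n / (1 - beta))"
      by (rule excess_sq_le[OF elim(3,2)])
    also have "\<dots> \<le> real (len n) / 2 * (real (len n) / 2)"
      using elim(1) len_bounds(3)[OF elim(3)] by (intro mult_left_mono) auto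
    finally have "(excess n)\<^sup>2 \<le> (real (len n) / 2)\<^sup>2" by (simp add: power2_eq_square)
    then show ?case by (rule power2_le_imp_le) simp
  qed
qed

lemma num_mult_bin_pmf_le:
  assumes n: "n \<ge> 1" and k: "q n = real k" "real (len n) / 2 \<le> q n"
    and J: "J \<ge> 1" "8 * real J * (excess n + real J) \<le> real (len n)"
  shows "real (num n) * bin_pmf (len n) k \<le> 2 * - ln beta / real J"
proof -
  have "bin_pmf (len n) k \<le> 2 * tail_gt (len n) (q n) / real J"
    using bin_pmf_le_tail_gt[of J "len n" k] J k by (simp add: excess_def)
  then have "real (num n) * bin_pmf (len n) k \<le> real (num n) * (2 * tail_gt (len n) (q n) / real J)"
    by (rule mult_left_mono) simp
  also have "\<dots> = 2 * (real (num n) * tail_gt (len n) (q n)) / real J"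
    by simp
  also have "\<dots> \<le> 2 * - ln beta / real J"
    using num_mult_tail_gt_le[OF n] J by (intro divide_right_mono) auto
  finally show ?thesis .
qed

text \<open>The gap \<open>tail_ge - tail_gt\<close> is the point mass at \<open>q n\<close>, which is small compared with
  \<open>tail_gt\<close> at scale \<open>J \<approx> n powr (lam / 8)\<close>.\<close>
lemma eventually_num_mult_tail_diff_le:
  "\<forall>\<^sub>F n in sequentially. real (num n) * (tail_ge (len n) (q n) - tail_gt (len n) (q n))
      \<le> 2 * - ln beta / (real n powr (lam / 8) - 1)"
proof -
  have asymp: "\<forall>\<^sub>F n in sequentially. 8 * real n powr (lam / 8) *
      (sqrt (real n powr lam * ln (real n / c)) + real n powr (lam / 8)) \<le> real n powr lam - 1"
    "\<forall>\<^sub>F n in sequentially. 0 \<le> ln (real n / c)" if "0 < c" for c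
    using lam(1) that by real_asymp+
  have "0 < 1 - beta" using beta by simp
  have "\<forall>\<^sub>F n in sequentially. 2 \<le> real n powr (lam / 8)"
    using lam by real_asymp
  then show ?thesis
    using asymp[OF \<open>0 < 1 - beta\<close>] eventually_half_len_le_quantile eventually_ge_at_top[of 1]
  proof eventually_elim
    case (elim n)
    let ?x = "real n powr (lam / 8)" and ?l = "len n"
    let ?S = "sqrt (real n powr lam * ln (real n / (1 - beta)))"
    have L: "0 \<le> 2 * - ln beta" using beta by simp
    show ?case
    proof (cases "q n \<in> \<nat>")
      case False
      have "0 \<le> 2 * - ln beta / (?x - 1)"
        using L elim(1) by (intro divide_nonneg_pos) auto
      then show ?thesis using False by (simp add: tail_ge_eq_tail_gt)
    next
      case True
      then obtain k where k: "q n = real k" by (rule Nats_cases)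
      define J where "J = nat \<lfloor>?x\<rfloor>"
      have J: "?x - 1 < real J" "real J \<le> ?x" "J \<ge> 1"
        unfolding J_def using elim(1) by linarith+
      have "(excess n)\<^sup>2 \<le> real ?l / 2 * ln (real n / (1 - beta))"
        by (rule excess_sq_le[OF elim(5,4)])
      also have "\<dots> \<le> real n powr lam * ln (real n / (1 - beta))"
        using len_bounds(2)[OF elim(5)] elim(3) by (intro mult_right_mono) auto
      finally have "excess n \<le> ?S"
        by (rule real_le_rsqrt)
      moreover have "0 \<le> excess n" using elim(4) by (simp add: excess_def)
      ultimately have "8 * real J * (excess n + real J) \<le> 8 * ?x * (?S + ?x)"
        using J by (intro mult_mono) auto
      then have "8 * real J * (excess n + real J) \<le> real ?l"
        using elim(2) len_bounds(3)[OF elim(5)] by linarith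
      then have "real (num n) * (tail_ge ?l (q n) - tail_gt ?l (q n)) \<le> 2 * - ln beta / real J"
        using num_mult_bin_pmf_le[OF elim(5) k elim(4) J(3)] k tail_ge_minus_tail_gt[of ?l k] by simp
      also have "\<dots> \<le> 2 * - ln beta / (?x - 1)"
        using J L elim(1) by (intro divide_left_mono) auto
      finally show ?thesis .
    qed
  qed
qed

lemma prob_not_tribe_max_gt_tendsto:
  "(\<lambda>n. prob_unif n (\<lambda>x. \<not> q n < real (tribe_max lam n x))) \<longlonglongrightarrow> beta"
proof -
  have "\<forall>\<^sub>F n in sequentially. norm (prob_unif n (\<lambda>x. \<not> q n < real (tribe_max lam n x)) - beta)
      \<le> 2 * - ln beta / (real n powr (lam / 8) - 1)"
    using eventually_num_mult_tail_diff_le eventually_ge_at_top[of 1]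
  proof eventually_elim
    case (elim n)
    have "\<bar>(1 - tail_gt (len n) (q n)) ^ num n - beta\<bar> \<le>
        real (num n) * (tail_ge (len n) (q n) - tail_gt (len n) (q n))"
      using quantile_tail_powers[OF elim(2)]
      by (intro abs_power_minus_le_of_between tail_gt_nonneg tail_gt_le_tail_ge tail_ge_le_one)
    then show ?case
      using elim(1) tribes.prob_not_tribe_max_gt[OF tribes_of_ge_1[OF elim(2)]] by simp
  qed
  moreover have "(\<lambda>n. c / (real n powr (lam / 8) - 1)) \<longlonglongrightarrow> 0" for c
    using lam by real_asymp
  ultimately show ?thesis
    by (subst LIM_zero_iff[symmetric]) (rule Lim_null_comparison)
qed

text \<open>If the excess over \<open>len n / 2\<close> were at most \<open>M \<surd>(len n)\<close>, the tail probability
  would be bounded below by a constant depending only on \<open>M\<close>, contradicting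
  \<open>num n * tail_gt \<le> - ln beta\<close> with \<open>num n \<rightarrow> \<infinity>\<close>.\<close>
lemma filterlim_excess_sq_div_len: "filterlim (\<lambda>n. (excess n)\<^sup>2 / real (len n)) at_top sequentially"
  unfolding filterlim_at_top
proof
  fix Z :: real
  define M where "M = max 1 (sqrt \<bar>Z\<bar>)"
  have "(sqrt \<bar>Z\<bar>)\<^sup>2 \<le> M\<^sup>2"
    unfolding M_def by (intro power_mono) auto
  then have M: "1 \<le> M" "Z \<le> M\<^sup>2"
    unfolding M_def by auto
  define c where "c = (1/2 - exp (-2)) * exp (- 16 * (M + 1)\<^sup>2)"
  have "exp (-2::real) < 1/2"
    using exp_ge_add_one_self[of "2::real"] by (simp add: exp_minus field_simps)
  then have c: "0 < c" unfolding c_def by simp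
  have "\<forall>\<^sub>F x in at_top. 16 * c * sqrt x + 12 \<le> (x::real)" if "0 < c" for c
    using that by real_asymp
  then have "\<forall>\<^sub>F x in at_top. 16 * M * sqrt x + 12 \<le> (x::real)"
    using M by simp
  then have "\<forall>\<^sub>F n in sequentially. 16 * M * sqrt (real (len n)) + 12 \<le> real (len n)"
    using filterlim_len by (rule eventually_compose_filterlim)
  then show "\<forall>\<^sub>F n in sequentially. Z \<le> (excess n)\<^sup>2 / real (len n)"
    using filterlim_num[unfolded filterlim_at_top_dense, rule_format, of "- ln beta / c"]
      eventually_ge_at_top[of 1]
  proof eventually_elim
    case (elim n)
    have l: "1 \<le> real (len n)" using len_bounds(1)[OF elim(3)] by simp
    have "M * sqrt (real (len n)) \<le> excess n"
    proof (rule ccontr)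
      assume "\<not> M * sqrt (real (len n)) \<le> excess n"
      then have "c \<le> tail_gt (len n) (q n)"
        using tail_gt_sqrt_lower_bound[OF l M(1) elim(1)]
          tail_gt_antimono[of "q n" "real (len n) / 2 + M * sqrt (real (len n))" "len n"]
        unfolding c_def excess_def by simp
      then have "real (num n) * c \<le> - ln beta"
        using num_mult_tail_gt_le[OF elim(3)] by (meson mult_left_mono of_nat_0_le_iff order_trans)
      then show False using elim(2) c by (simp add: field_simps)
    qed
    then have "(M * sqrt (real (len n)))\<^sup>2 \<le> (excess n)\<^sup>2"
      using M l by (intro power_mono) auto
    then have "M\<^sup>2 \<le> (excess n)\<^sup>2 / real (len n)"
      using l by (simp add: field_simps)
    then show ?case using M by simp
  qed
qed

lemma eventually_abs_noise_cov_le: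
  assumes eps: "0 < eps" "eps < 1"
  shows "\<forall>\<^sub>F n in sequentially.
    \<bar>noise_corr n eps (\<lambda>x. q n < real (tribe_max lam n x)) -
      (expect_unif n (\<lambda>x. of_bool (q n < real (tribe_max lam n x))))\<^sup>2\<bar>
    \<le> - ln beta * exp (1 - eps * ((excess n)\<^sup>2 / real (len n)) / 2)
       + - ln beta / (eps\<^sup>2 * ((excess n)\<^sup>2 / real (len n))) + (ln beta)\<^sup>2 / real (num n)"
  using eventually_half_len_le_quantile eventually_excess_le_half_len eventually_ge_at_top[of 1]
    filterlim_excess_sq_div_len[unfolded filterlim_at_top, rule_format, of 1]
proof eventually_elim
  case (elim n)
  let ?l = "len n" and ?m = "real (num n)" and ?G = "tail_gt (len n) (q n)" and ?L = "- ln beta"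
  define t where "t = excess n"
  define K where "K = t\<^sup>2 / real ?l"
  let ?E = "exp (1 - eps * K / 2)"
  have l: "1 \<le> real ?l" using len_bounds(1)[OF elim(3)] by simp
  have m: "0 < ?m" using num_bounds(1)[OF elim(3)] by simp
  have mG: "?m * ?G \<le> ?L" by (rule num_mult_tail_gt_le[OF elim(3)])
  have K: "1 \<le> K" using elim(4) unfolding K_def t_def .
  have "t \<noteq> 0" using K unfolding K_def by auto
  then have t: "0 < t" "t \<le> real ?l / 2" "q n = real ?l / 2 + t"
    using elim(1,2) unfolding t_def excess_def by auto
  have "\<bar>noise_corr n eps (\<lambda>x. q n < real (tribe_max lam n x)) -
      (expect_unif n (\<lambda>x. of_bool (q n < real (tribe_max lam n x))))\<^sup>2\<bar>
    \<le> ?m * (?E * ?G + ?G * real ?l / (eps\<^sup>2 * t\<^sup>2) + ?G\<^sup>2)"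
    unfolding K_def by (rule tribes.abs_noise_cov_tribe_max_le_exp[OF tribes_of_ge_1[OF elim(3)] l eps t])
  also have "\<dots> = ?E * (?m * ?G) + (?m * ?G) / (eps\<^sup>2 * K) + (?m * ?G) * ?G"
    unfolding K_def using l by (simp add: field_simps power2_eq_square)
  also have "\<dots> \<le> ?E * ?L + ?L / (eps\<^sup>2 * K) + ?L * (?L / ?m)"
  proof (intro add_mono)
    show "?E * (?m * ?G) \<le> ?E * ?L" using mG by (intro mult_left_mono) auto
    show "(?m * ?G) / (eps\<^sup>2 * K) \<le> ?L / (eps\<^sup>2 * K)" using mG K by (intro divide_right_mono) auto
    have "?G \<le> ?L / ?m" using mG m by (simp add: field_simps)
    then show "(?m * ?G) * ?G \<le> ?L * (?L / ?m)"
      using mG beta tail_gt_nonneg by (intro mult_mono) auto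
  qed
  finally show ?case unfolding K_def t_def by (simp add: power2_eq_square mult.commute)
qed

lemma noise_sensitive_tribe_max: "noise_sensitive (\<lambda>n x. q n < real (tribe_max lam n x))"
  unfolding noise_sensitive_def
proof (intro allI impI)
  fix eps :: real assume eps: "0 < eps \<and> eps < 1"
  have "((\<lambda>K. - ln beta * exp (1 - eps * K / 2) + - ln beta / (eps\<^sup>2 * K)) \<longlongrightarrow> 0) at_top"
    using eps by real_asymp
  from filterlim_compose[OF this filterlim_excess_sq_div_len]
  have "(\<lambda>n. - ln beta * exp (1 - eps * ((excess n)\<^sup>2 / real (len n)) / 2)
      + - ln beta / (eps\<^sup>2 * ((excess n)\<^sup>2 / real (len n)))) \<longlonglongrightarrow> 0" .
  moreover have "(\<lambda>n. (ln beta)\<^sup>2 / real (num n)) \<longlonglongrightarrow> 0"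
    by (rule tendsto_divide_0[OF tendsto_const filterlim_at_top_imp_at_infinity[OF filterlim_num]])
  ultimately have bound: "(\<lambda>n. - ln beta * exp (1 - eps * ((excess n)\<^sup>2 / real (len n)) / 2)
      + - ln beta / (eps\<^sup>2 * ((excess n)\<^sup>2 / real (len n))) + (ln beta)\<^sup>2 / real (num n)) \<longlonglongrightarrow> 0"
    by (rule tendsto_add[where a=0 and b=0, simplified])
  show "(\<lambda>n. noise_corr n eps (\<lambda>x. q n < real (tribe_max lam n x)) -
      (expect_unif n (\<lambda>x. of_bool (q n < real (tribe_max lam n x))))\<^sup>2) \<longlonglongrightarrow> 0"
  proof (rule Lim_null_comparison[OF _ bound])
    show "\<forall>\<^sub>F n in sequentially. norm (noise_corr n eps (\<lambda>x. q n < real (tribe_max lam n x)) -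
        (expect_unif n (\<lambda>x. of_bool (q n < real (tribe_max lam n x))))\<^sup>2) \<le>
      - ln beta * exp (1 - eps * ((excess n)\<^sup>2 / real (len n)) / 2)
      + - ln beta / (eps\<^sup>2 * ((excess n)\<^sup>2 / real (len n))) + (ln beta)\<^sup>2 / real (num n)"
      using eventually_abs_noise_cov_le eps by simp
  qed
qed

end

theorem proposition2p1:
  fixes lam beta :: real and q :: "nat \<Rightarrow> real"
  assumes "0 < lam" "lam < 1" "0 < beta" "beta < 1"
    and "\<forall>n. is_quantile n (tribe_max lam n) beta (q n)"
  shows "noise_sensitive (\<lambda>n x. real (tribe_max lam n x) > q n)
       \<and> (\<lambda>n. prob_unif n (\<lambda>x. \<not> (real (tribe_max lam n x) > q n))) \<longlonglongrightarrow> beta"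
proof -
  interpret tribes_quantile lam beta q
    using assms by unfold_locales auto
  show ?thesis
    using noise_sensitive_tribe_max prob_not_tribe_max_gt_tendsto by simp
qed

end
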